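(* Let $H$ be a $k$-linear semi-Hopf category, $A$ a right $H$-comodule category and $B=A^{{\rm co}H}$. For $x,y,z\in X$ let ${\rm can}'^{y}_{zx}:A_{zx}\otimes_{B_x}A_{xy}\to A_{zy}\otimes H_{zx}$, ${\rm can}'^{y}_{zx}(a\otimes_{B_x}a')=a_{[0]}a'\otimes a_{[1]}$. The following are equivalent: (1) ${\rm can}'^{y}_{zx}$ is bijective for all $x,y,z\in X$; (2) for all $x,z\in X$, ${\rm can}'^{z}_{zx}$ is bijective and ${\rm can}'^{x}_{zx}$ has a left inverse; (3) for all $x,z\in X$ there is a $k$-linear map $\gamma'_{zx}:H_{zx}\to A_{zx}\otimes_{B_x}A_{xz}$, $\gamma'_{zx}(h)=\sum_i l'_i(h)\otimes_{B_x}r'_i(h)$, such that for all $h\in H_{zx}$ and $a\in A_{zx}$: $$\sum_i l'_i(h)_{[0]}r'_i(h)\otimes l'_i(h)_{[1]}=1_z\otimes h,\qquad\sum_i l'_i(a_{[1]})\otimes_{B_x}r'_i(a_{[1]})a_{[0]}=a\otimes_{B_x}1_x.$$ (When these hold, $A$ is called an $H$-Galois' category extension of $B$.)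
   Context: Let $k$ be a commutative ring; unadorned $\otimes$ is over $k$. A $k$-linear category $A$ with class of objects $X$ consists of $k$-modules $A_{xy}$, associative compositions $A_{xy}\otimes A_{yz}\to A_{xz}$, $a\otimes b\mapsto ab$, and units $1_x\in A_{xx}$. A $k$-linear semi-Hopf category $H$ (objects $X$) is a $k$-linear category in which each $H_{xy}$ is a $k$-coalgebra with $\Delta_{xy}(h)=h_{(1)}\otimes h_{(2)}$ and counit $\varepsilon_{xy}$, such that $\Delta_{xz}(hh')=h_{(1)}h'_{(1)}\otimes h_{(2)}h'_{(2)}$, $\Delta_{xx}(1_x)=1_x\otimes1_x$, $\varepsilon_{xz}(hh')=\varepsilon_{xy}(h)\varepsilon_{yz}(h')$, $\varepsilon_{xx}(1_x)=1$. A right $H$-comodule category is a $k$-linear category $A$ with objects $X$ such that each $A_{xy}$ is a right $H_{xy}$-comodule, $\rho_{xy}(a)=a_{[0]}\otimes a_{[1]}$, with $\rho_{xz}(ab)=a_{[0]}b_{[0]}\otimes a_{[1]}b_{[1]}$ and $\rho_{xx}(1_x)=1_x\otimes1_x$. Its coinvariants are the $k$-algebras $B_x=\{a\in A_{xx}\mid\rho_{xx}(a)=a\otimes1_x\}$; $A_{xy}$ is a $B_x$-$B_y$-bimodule by multiplication. *)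

theory Defs
  imports Complex_Main
begin

text \<open>A formal k-linear combination of elements of a type 'p is a finitely
supported function 'p => 'k.  Tensor products of k-modules are constructed
as usual: the free k-module on pairs (or triples) modulo the k-submodule
generated by the multilinearity (and, over an algebra B, the B-balancedness)
relations.  Elements of a tensor product are the equivalence classes.\<close>

definition fsupp :: "('p \<Rightarrow> 'k::zero) \<Rightarrow> 'p set" where
  "fsupp u = {p. u p \<noteq> 0}"

definition fdelta :: "'p \<Rightarrow> 'p \<Rightarrow> 'k::{zero,one}" where
  "fdelta p = (\<lambda>q. if q = p then 1 else 0)"

definition fadd :: "('p \<Rightarrow> 'k::plus) \<Rightarrow> ('p \<Rightarrow> 'k) \<Rightarrow> 'p \<Rightarrow> 'k" where
  "fadd u v = (\<lambda>p. u p + v p)"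

definition fdiff :: "('p \<Rightarrow> 'k::minus) \<Rightarrow> ('p \<Rightarrow> 'k) \<Rightarrow> 'p \<Rightarrow> 'k" where
  "fdiff u v = (\<lambda>p. u p - v p)"

definition fscale :: "'k::times \<Rightarrow> ('p \<Rightarrow> 'k) \<Rightarrow> 'p \<Rightarrow> 'k" where
  "fscale c u = (\<lambda>p. c * u p)"

definition lin_ext :: "('p \<Rightarrow> 'k::comm_ring_1) \<Rightarrow> ('p \<Rightarrow> 'q \<Rightarrow> 'k) \<Rightarrow> 'q \<Rightarrow> 'k" where
  "lin_ext u g = (\<lambda>q. \<Sum>p\<in>fsupp u. u p * g p q)"

definition evalsum :: "('k \<Rightarrow> 'm \<Rightarrow> 'm) \<Rightarrow> ('p \<Rightarrow> 'k::comm_ring_1) \<Rightarrow> ('p \<Rightarrow> 'm::ab_group_add) \<Rightarrow> 'm" where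
  "evalsum sc u g = (\<Sum>p\<in>fsupp u. sc (u p) (g p))"

inductive_set fspan :: "('p \<Rightarrow> 'k::comm_ring_1) set \<Rightarrow> ('p \<Rightarrow> 'k) set" for G where
  zero: "(\<lambda>_. 0) \<in> fspan G"
| gen: "g \<in> G \<Longrightarrow> g \<in> fspan G"
| add: "u \<in> fspan G \<Longrightarrow> v \<in> fspan G \<Longrightarrow> fadd u v \<in> fspan G"
| scale: "u \<in> fspan G \<Longrightarrow> fscale c u \<in> fspan G"

definition free2 :: "'a set \<Rightarrow> 'b set \<Rightarrow> ('a \<times> 'b \<Rightarrow> 'k::comm_ring_1) set" where
  "free2 M N = {u. finite (fsupp u) \<and> fsupp u \<subseteq> M \<times> N}"

definition free3 :: "'a set \<Rightarrow> 'b set \<Rightarrow> 'c set \<Rightarrow> ('a \<times> 'b \<times> 'c \<Rightarrow> 'k::comm_ring_1) set" where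
  "free3 M N P = {u. finite (fsupp u) \<and> fsupp u \<subseteq> M \<times> N \<times> P}"

definition gens2 :: "('k::comm_ring_1 \<Rightarrow> 'a::ab_group_add \<Rightarrow> 'a) \<Rightarrow> ('k \<Rightarrow> 'b::ab_group_add \<Rightarrow> 'b)
    \<Rightarrow> 'a set \<Rightarrow> 'b set \<Rightarrow> ('a \<times> 'b \<Rightarrow> 'k) set" where
  "gens2 sa sb M N =
     {fdiff (fdelta (a + a', b)) (fadd (fdelta (a, b)) (fdelta (a', b))) | a a' b. a \<in> M \<and> a' \<in> M \<and> b \<in> N}
   \<union> {fdiff (fdelta (a, b + b')) (fadd (fdelta (a, b)) (fdelta (a, b'))) | a b b'. a \<in> M \<and> b \<in> N \<and> b' \<in> N}
   \<union> {fdiff (fdelta (sa c a, b)) (fscale c (fdelta (a, b))) | c a b. a \<in> M \<and> b \<in> N}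
   \<union> {fdiff (fdelta (a, sb c b)) (fscale c (fdelta (a, b))) | c a b. a \<in> M \<and> b \<in> N}"

definition gens3 :: "('k::comm_ring_1 \<Rightarrow> 'a::ab_group_add \<Rightarrow> 'a) \<Rightarrow> ('k \<Rightarrow> 'b::ab_group_add \<Rightarrow> 'b)
    \<Rightarrow> ('k \<Rightarrow> 'c::ab_group_add \<Rightarrow> 'c) \<Rightarrow> 'a set \<Rightarrow> 'b set \<Rightarrow> 'c set \<Rightarrow> ('a \<times> 'b \<times> 'c \<Rightarrow> 'k) set" where
  "gens3 sa sb sc M N P =
     {fdiff (fdelta (a + a', b, c)) (fadd (fdelta (a, b, c)) (fdelta (a', b, c))) | a a' b c. a \<in> M \<and> a' \<in> M \<and> b \<in> N \<and> c \<in> P}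
   \<union> {fdiff (fdelta (a, b + b', c)) (fadd (fdelta (a, b, c)) (fdelta (a, b', c))) | a b b' c. a \<in> M \<and> b \<in> N \<and> b' \<in> N \<and> c \<in> P}
   \<union> {fdiff (fdelta (a, b, c + c')) (fadd (fdelta (a, b, c)) (fdelta (a, b, c'))) | a b c c'. a \<in> M \<and> b \<in> N \<and> c \<in> P \<and> c' \<in> P}
   \<union> {fdiff (fdelta (sa t a, b, c)) (fscale t (fdelta (a, b, c))) | t a b c. a \<in> M \<and> b \<in> N \<and> c \<in> P}
   \<union> {fdiff (fdelta (a, sb t b, c)) (fscale t (fdelta (a, b, c))) | t a b c. a \<in> M \<and> b \<in> N \<and> c \<in> P}
   \<union> {fdiff (fdelta (a, b, sc t c)) (fscale t (fdelta (a, b, c))) | t a b c. a \<in> M \<and> b \<in> N \<and> c \<in> P}"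

definition balgens :: "('a \<Rightarrow> 'a \<Rightarrow> 'a) \<Rightarrow> 'a set \<Rightarrow> 'a set \<Rightarrow> 'a set \<Rightarrow> ('a \<times> 'a \<Rightarrow> 'k::comm_ring_1) set" where
  "balgens m B M N = {fdiff (fdelta (m a \<beta>, a')) (fdelta (a, m \<beta> a')) | a \<beta> a'. a \<in> M \<and> \<beta> \<in> B \<and> a' \<in> N}"

definition trel :: "('p \<Rightarrow> 'k::comm_ring_1) set \<Rightarrow> ('p \<Rightarrow> 'k) set \<Rightarrow> (('p \<Rightarrow> 'k) \<times> ('p \<Rightarrow> 'k)) set" where
  "trel D G = {(u, v). u \<in> D \<and> v \<in> D \<and> fdiff u v \<in> fspan G}"

definition krel2 where
  "krel2 sa sb M N = trel (free2 M N) (gens2 sa sb M N)"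

definition krel3 where
  "krel3 sa sb sc M N P = trel (free3 M N P) (gens3 sa sb sc M N P)"

definition brel where
  "brel sa m B M N = trel (free2 M N) (gens2 sa sa M N \<union> balgens m B M N)"

definition tensK where "tensK sa sb M N = free2 M N // krel2 sa sb M N"
definition tensB where "tensB sa m B M N = free2 M N // brel sa m B M N"

definition qmap :: "('u \<Rightarrow> 'v) \<Rightarrow> ('v \<times> 'v) set \<Rightarrow> 'u set \<Rightarrow> 'v set" where
  "qmap f r C = r `` (f ` C)"

text \<open>A k-linear category with object set X: hom-sets are k-submodules
Hom x y of an ambient k-module (type 'a with scalar action sc), cmp is the
composition (a in Hom x y, b in Hom y z gives cmp a b in Hom x z), u x the
identity of x.\<close>
definition klincat :: "('k::comm_ring_1 \<Rightarrow> 'a::ab_group_add \<Rightarrow> 'a) \<Rightarrow> 'x set \<Rightarrow> ('x \<Rightarrow> 'x \<Rightarrow> 'a set)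
    \<Rightarrow> ('a \<Rightarrow> 'a \<Rightarrow> 'a) \<Rightarrow> ('x \<Rightarrow> 'a) \<Rightarrow> bool" where
  "klincat sc X Hom cmp u \<longleftrightarrow>
     module sc \<and>
     (\<forall>x\<in>X. \<forall>y\<in>X. 0 \<in> Hom x y \<and> (\<forall>a\<in>Hom x y. \<forall>b\<in>Hom x y. a + b \<in> Hom x y) \<and>
        (\<forall>c. \<forall>a\<in>Hom x y. sc c a \<in> Hom x y)) \<and>
     (\<forall>x\<in>X. \<forall>y\<in>X. \<forall>z\<in>X. \<forall>a\<in>Hom x y. \<forall>b\<in>Hom y z. cmp a b \<in> Hom x z) \<and>
     (\<forall>x\<in>X. \<forall>y\<in>X. \<forall>z\<in>X. \<forall>a\<in>Hom x y. \<forall>a'\<in>Hom x y. \<forall>b\<in>Hom y z. \<forall>b'\<in>Hom y z. \<forall>c.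
        cmp (a + a') b = cmp a b + cmp a' b \<and> cmp a (b + b') = cmp a b + cmp a b' \<and>
        cmp (sc c a) b = sc c (cmp a b) \<and> cmp a (sc c b) = sc c (cmp a b)) \<and>
     (\<forall>w\<in>X. \<forall>x\<in>X. \<forall>y\<in>X. \<forall>z\<in>X. \<forall>a\<in>Hom w x. \<forall>b\<in>Hom x y. \<forall>c\<in>Hom y z.
        cmp (cmp a b) c = cmp a (cmp b c)) \<and>
     (\<forall>x\<in>X. u x \<in> Hom x x) \<and>
     (\<forall>x\<in>X. \<forall>y\<in>X. \<forall>a\<in>Hom x y. cmp (u x) a = a \<and> cmp a (u y) = a)"

definition klinear_on :: "('k::comm_ring_1 \<Rightarrow> 'a::ab_group_add \<Rightarrow> 'a) \<Rightarrow> ('k \<Rightarrow> 'b::ab_group_add \<Rightarrow> 'b)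
    \<Rightarrow> 'a set \<Rightarrow> 'b set \<Rightarrow> ('a \<Rightarrow> 'b) \<Rightarrow> bool" where
  "klinear_on sa sb M N f \<longleftrightarrow> (\<forall>a\<in>M. f a \<in> N) \<and>
     (\<forall>a\<in>M. \<forall>a'\<in>M. f (a + a') = f a + f a') \<and> (\<forall>c. \<forall>a\<in>M. f (sa c a) = sb c (f a))"

definition qlinear_on :: "('k::comm_ring_1 \<Rightarrow> 'a::ab_group_add \<Rightarrow> 'a) \<Rightarrow> 'a set
    \<Rightarrow> ('p \<Rightarrow> 'k) set \<Rightarrow> (('p \<Rightarrow> 'k) \<times> ('p \<Rightarrow> 'k)) set \<Rightarrow> ('a \<Rightarrow> 'p \<Rightarrow> 'k) \<Rightarrow> bool" where
  "qlinear_on sa M D r f \<longleftrightarrow> (\<forall>a\<in>M. f a \<in> D) \<and>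
     (\<forall>a\<in>M. \<forall>a'\<in>M. (f (a + a'), fadd (f a) (f a')) \<in> r) \<and>
     (\<forall>c. \<forall>a\<in>M. (f (sa c a), fscale c (f a)) \<in> r)"

text \<open>Semi-Hopf category: a k-linear category whose hom-modules H x y are
k-coalgebras (comultiplication delta x y h, a representative of an element of
H x y (x)_k H x y; counit eps x y) compatible with composition and units.\<close>
definition semi_hopf_cat :: "('k::comm_ring_1 \<Rightarrow> 'h::ab_group_add \<Rightarrow> 'h) \<Rightarrow> 'x set \<Rightarrow> ('x \<Rightarrow> 'x \<Rightarrow> 'h set)
    \<Rightarrow> ('h \<Rightarrow> 'h \<Rightarrow> 'h) \<Rightarrow> ('x \<Rightarrow> 'h) \<Rightarrow> ('x \<Rightarrow> 'x \<Rightarrow> 'h \<Rightarrow> ('h \<times> 'h \<Rightarrow> 'k)) \<Rightarrow> ('x \<Rightarrow> 'x \<Rightarrow> 'h \<Rightarrow> 'k) \<Rightarrow> bool" where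
  "semi_hopf_cat sh X H mh uh dl ep \<longleftrightarrow>
     klincat sh X H mh uh \<and>
     \<comment> \<open>each H x y is a k-coalgebra\<close>
     (\<forall>x\<in>X. \<forall>y\<in>X.
        qlinear_on sh (H x y) (free2 (H x y) (H x y)) (krel2 sh sh (H x y) (H x y)) (dl x y) \<and>
        klinear_on sh (\<lambda>c d. c * d) (H x y) UNIV (ep x y) \<and>
        (\<forall>h\<in>H x y.
           (lin_ext (dl x y h) (\<lambda>(h1, h2). lin_ext (dl x y h1) (\<lambda>(g1, g2). fdelta (g1, g2, h2))),
            lin_ext (dl x y h) (\<lambda>(h1, h2). lin_ext (dl x y h2) (\<lambda>(g1, g2). fdelta (h1, g1, g2))))
           \<in> krel3 sh sh sh (H x y) (H x y) (H x y) \<and>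
           evalsum sh (dl x y h) (\<lambda>(h1, h2). sh (ep x y h1) h2) = h \<and>
           evalsum sh (dl x y h) (\<lambda>(h1, h2). sh (ep x y h2) h1) = h)) \<and>
     \<comment> \<open>compatibility with composition and units\<close>
     (\<forall>x\<in>X. \<forall>y\<in>X. \<forall>z\<in>X. \<forall>h\<in>H x y. \<forall>h'\<in>H y z.
        (dl x z (mh h h'),
         lin_ext (dl x y h) (\<lambda>(h1, h2). lin_ext (dl y z h') (\<lambda>(g1, g2). fdelta (mh h1 g1, mh h2 g2))))
        \<in> krel2 sh sh (H x z) (H x z) \<and>
        ep x z (mh h h') = ep x y h * ep y z h') \<and>
     (\<forall>x\<in>X. (dl x x (uh x), fdelta (uh x, uh x)) \<in> krel2 sh sh (H x x) (H x x) \<and> ep x x (uh x) = 1)"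

text \<open>Right H-comodule category: a k-linear category A with the same objects,
each A x y a right H x y-comodule (coaction rho x y a, a representative of an
element of A x y (x)_k H x y), compatible with composition and units.\<close>
definition comodule_cat :: "('k::comm_ring_1 \<Rightarrow> 'h::ab_group_add \<Rightarrow> 'h) \<Rightarrow> ('x \<Rightarrow> 'x \<Rightarrow> 'h set)
    \<Rightarrow> ('h \<Rightarrow> 'h \<Rightarrow> 'h) \<Rightarrow> ('x \<Rightarrow> 'h) \<Rightarrow> ('x \<Rightarrow> 'x \<Rightarrow> 'h \<Rightarrow> ('h \<times> 'h \<Rightarrow> 'k)) \<Rightarrow> ('x \<Rightarrow> 'x \<Rightarrow> 'h \<Rightarrow> 'k)
    \<Rightarrow> ('k \<Rightarrow> 'a::ab_group_add \<Rightarrow> 'a) \<Rightarrow> 'x set \<Rightarrow> ('x \<Rightarrow> 'x \<Rightarrow> 'a set) \<Rightarrow> ('a \<Rightarrow> 'a \<Rightarrow> 'a) \<Rightarrow> ('x \<Rightarrow> 'a)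
    \<Rightarrow> ('x \<Rightarrow> 'x \<Rightarrow> 'a \<Rightarrow> ('a \<times> 'h \<Rightarrow> 'k)) \<Rightarrow> bool" where
  "comodule_cat sh H mh uh dl ep sa X A ma ua rho \<longleftrightarrow>
     klincat sa X A ma ua \<and>
     (\<forall>x\<in>X. \<forall>y\<in>X.
        qlinear_on sa (A x y) (free2 (A x y) (H x y)) (krel2 sa sh (A x y) (H x y)) (rho x y) \<and>
        (\<forall>a\<in>A x y.
           (lin_ext (rho x y a) (\<lambda>(a0, h). lin_ext (rho x y a0) (\<lambda>(b, g). fdelta (b, g, h))),
            lin_ext (rho x y a) (\<lambda>(a0, h). lin_ext (dl x y h) (\<lambda>(g1, g2). fdelta (a0, g1, g2))))
           \<in> krel3 sa sh sh (A x y) (H x y) (H x y) \<and>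
           evalsum sa (rho x y a) (\<lambda>(a0, h). sa (ep x y h) a0) = a)) \<and>
     (\<forall>x\<in>X. \<forall>y\<in>X. \<forall>z\<in>X. \<forall>a\<in>A x y. \<forall>b\<in>A y z.
        (rho x z (ma a b),
         lin_ext (rho x y a) (\<lambda>(a0, h). lin_ext (rho y z b) (\<lambda>(b0, g). fdelta (ma a0 b0, mh h g))))
        \<in> krel2 sa sh (A x z) (H x z)) \<and>
     (\<forall>x\<in>X. (rho x x (ua x), fdelta (ua x, uh x)) \<in> krel2 sa sh (A x x) (H x x))"

definition coinv :: "('k::comm_ring_1 \<Rightarrow> 'h::ab_group_add \<Rightarrow> 'h) \<Rightarrow> ('x \<Rightarrow> 'x \<Rightarrow> 'h set) \<Rightarrow> ('x \<Rightarrow> 'h)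
    \<Rightarrow> ('k \<Rightarrow> 'a::ab_group_add \<Rightarrow> 'a) \<Rightarrow> ('x \<Rightarrow> 'x \<Rightarrow> 'a set) \<Rightarrow> ('x \<Rightarrow> 'x \<Rightarrow> 'a \<Rightarrow> ('a \<times> 'h \<Rightarrow> 'k))
    \<Rightarrow> 'x \<Rightarrow> 'a set" where
  "coinv sh H uh sa A rho x = {a \<in> A x x. (rho x x a, fdelta (a, uh x)) \<in> krel2 sa sh (A x x) (H x x)}"

definition canp :: "('a \<Rightarrow> 'a \<Rightarrow> 'a) \<Rightarrow> ('x \<Rightarrow> 'x \<Rightarrow> 'a \<Rightarrow> ('a \<times> 'h \<Rightarrow> 'k::comm_ring_1))
    \<Rightarrow> 'x \<Rightarrow> 'x \<Rightarrow> ('a \<times> 'a \<Rightarrow> 'k) \<Rightarrow> ('a \<times> 'h \<Rightarrow> 'k)" where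
  "canp ma rho z x u = lin_ext u (\<lambda>(a, a'). lin_ext (rho z x a) (\<lambda>(a0, h). fdelta (ma a0 a', h)))"

end

theory Submission
  imports Defs
begin

text \<open>
  Given \<gamma>', the map a \<otimes> h \<mapsto> \<gamma>'(h) a, which multiplies the right tensor factor of \<gamma>'(h)
  by a, is inverse to can'^y_zx for every y: one composite is the identity by the first identity
  of (3), and the other one, evaluated at a \<otimes> a', is the second identity multiplied on the right
  by a'. Conversely, surjectivity of can'^z_zx yields \<gamma>'(h) as a preimage of 1_z \<otimes> h, its
  injectivity makes \<gamma>' linear, and since both sides of the second identity are mapped to
  a_[0] \<otimes> a_[1], injectivity of can'^x_zx gives that identity. The map can' is well defined on the
  tensor product over B_x because a coinvariant \<beta> has coaction \<beta> \<otimes> 1_x.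
\<close>

definition finsupp_on :: "'p set \<Rightarrow> ('p \<Rightarrow> 'k::comm_ring_1) set" where
  "finsupp_on S = {u. finite (fsupp u) \<and> fsupp u \<subseteq> S}"

lemma free2_eq_finsupp_on: "free2 M N = finsupp_on (M \<times> N)"
  by (simp add: free2_def finsupp_on_def)

lemma finsupp_on_finite: "u \<in> finsupp_on S \<Longrightarrow> finite (fsupp u)"
  by (simp add: finsupp_on_def)

lemma finsupp_on_fsupp_pair: "u \<in> finsupp_on (M \<times> N) \<Longrightarrow> (a, b) \<in> fsupp u \<Longrightarrow> a \<in> M \<and> b \<in> N"
  by (auto simp: finsupp_on_def)

lemma fsupp_fdelta: "fsupp (fdelta p :: 'p \<Rightarrow> 'k::comm_ring_1) \<subseteq> {p}"
  by (auto simp: fsupp_def fdelta_def)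

lemma fsupp_fadd: "fsupp (fadd u v :: 'p \<Rightarrow> 'k::comm_ring_1) \<subseteq> fsupp u \<union> fsupp v"
  by (auto simp: fsupp_def fadd_def)

lemma fsupp_fdiff: "fsupp (fdiff u v :: 'p \<Rightarrow> 'k::comm_ring_1) \<subseteq> fsupp u \<union> fsupp v"
  by (auto simp: fsupp_def fdiff_def)

lemma fsupp_fscale: "fsupp (fscale c u :: 'p \<Rightarrow> 'k::comm_ring_1) \<subseteq> fsupp u"
  by (auto simp: fsupp_def fscale_def)

lemma finite_fsupp_fdelta [simp]: "finite (fsupp (fdelta p :: 'p \<Rightarrow> 'k::comm_ring_1))"
  using fsupp_fdelta by (rule finite_subset) simp

lemma finite_fsupp_fadd [simp]:
  "finite (fsupp u) \<Longrightarrow> finite (fsupp v) \<Longrightarrow> finite (fsupp (fadd u v :: 'p \<Rightarrow> 'k::comm_ring_1))"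
  using fsupp_fadd by (rule finite_subset) simp

lemma finite_fsupp_fdiff [simp]:
  "finite (fsupp u) \<Longrightarrow> finite (fsupp v) \<Longrightarrow> finite (fsupp (fdiff u v :: 'p \<Rightarrow> 'k::comm_ring_1))"
  using fsupp_fdiff by (rule finite_subset) simp

lemma finite_fsupp_fscale [simp]:
  "finite (fsupp u) \<Longrightarrow> finite (fsupp (fscale c u :: 'p \<Rightarrow> 'k::comm_ring_1))"
  using fsupp_fscale by (rule finite_subset)

lemma finsupp_on_fdelta: "p \<in> S \<Longrightarrow> fdelta p \<in> finsupp_on S"
  using fsupp_fdelta by (fastforce simp: finsupp_on_def)

lemma finsupp_on_fadd: "u \<in> finsupp_on S \<Longrightarrow> v \<in> finsupp_on S \<Longrightarrow> fadd u v \<in> finsupp_on S"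
  using fsupp_fadd by (fastforce simp: finsupp_on_def)

lemma finsupp_on_fscale: "u \<in> finsupp_on S \<Longrightarrow> fscale c u \<in> finsupp_on S"
  using fsupp_fscale by (fastforce simp: finsupp_on_def)

lemma lin_ext_eq_sum:
  assumes "finite S" "fsupp u \<subseteq> S"
  shows "lin_ext u g q = (\<Sum>p\<in>S. u p * g p q)"
  unfolding lin_ext_def
  by (rule sum.mono_neutral_left) (use assms in \<open>auto simp: fsupp_def\<close>)

lemma lin_ext_fadd:
  assumes "finite (fsupp u)" "finite (fsupp v)"
  shows "lin_ext (fadd u v) g = fadd (lin_ext u g) (lin_ext v g)"
proof
  fix q
  let ?S = "fsupp u \<union> fsupp v"
  have S: "finite ?S" using assms by simp
  show "lin_ext (fadd u v) g q = fadd (lin_ext u g) (lin_ext v g) q"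
    unfolding lin_ext_eq_sum[OF S fsupp_fadd] lin_ext_eq_sum[OF S Un_upper1]
      lin_ext_eq_sum[OF S Un_upper2]
    by (simp add: fadd_def ring_distribs sum.distrib)
qed

lemma lin_ext_fdiff:
  assumes "finite (fsupp u)" "finite (fsupp v)"
  shows "lin_ext (fdiff u v) g = fdiff (lin_ext u g) (lin_ext v g)"
proof
  fix q
  let ?S = "fsupp u \<union> fsupp v"
  have S: "finite ?S" using assms by simp
  show "lin_ext (fdiff u v) g q = fdiff (lin_ext u g) (lin_ext v g) q"
    unfolding lin_ext_eq_sum[OF S fsupp_fdiff] lin_ext_eq_sum[OF S Un_upper1]
      lin_ext_eq_sum[OF S Un_upper2]
    by (simp add: fdiff_def left_diff_distrib sum_subtractf)
qed

lemma lin_ext_fscale: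
  assumes "finite (fsupp u)"
  shows "lin_ext (fscale c u) g = fscale c (lin_ext u g)"
proof
  fix q
  show "lin_ext (fscale c u) g q = fscale c (lin_ext u g) q"
    unfolding lin_ext_eq_sum[OF assms fsupp_fscale] lin_ext_eq_sum[OF assms order_refl]
    by (simp add: fscale_def sum_distrib_left mult.assoc)
qed

lemma lin_ext_zero: "lin_ext (\<lambda>_. 0) g = (\<lambda>_. 0)"
  by (simp add: lin_ext_def fsupp_def)

lemma lin_ext_fdelta: "lin_ext (fdelta p) g = g p"
proof
  fix q
  show "lin_ext (fdelta p) g q = g p q"
    using lin_ext_eq_sum[OF _ fsupp_fdelta, of p g q] by (simp add: fdelta_def)
qed

lemma lin_ext_fadd_fun: "lin_ext u (\<lambda>p. fadd (g p) (g' p)) = fadd (lin_ext u g) (lin_ext u g')"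
  by (rule ext) (simp add: lin_ext_def fadd_def ring_distribs sum.distrib)

lemma lin_ext_fdiff_fun: "lin_ext u (\<lambda>p. fdiff (g p) (g' p)) = fdiff (lin_ext u g) (lin_ext u g')"
  by (rule ext) (simp add: lin_ext_def fdiff_def right_diff_distrib sum_subtractf)

lemma lin_ext_fscale_fun: "lin_ext u (\<lambda>p. fscale c (g p)) = fscale c (lin_ext u g)"
  by (rule ext) (simp add: lin_ext_def fscale_def sum_distrib_left mult.left_commute)

lemma lin_ext_cong: "(\<And>p. p \<in> fsupp u \<Longrightarrow> g p = g' p) \<Longrightarrow> lin_ext u g = lin_ext u g'"
  unfolding lin_ext_def by (rule ext) (rule sum.cong, auto)

lemma lin_ext_cong_pair: "(\<And>a b. (a, b) \<in> fsupp u \<Longrightarrow> g (a, b) = g' (a, b)) \<Longrightarrow> lin_ext u g = lin_ext u g'"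
  by (rule lin_ext_cong) auto

lemma fsupp_lin_ext: "fsupp (lin_ext u g) \<subseteq> (\<Union>p\<in>fsupp u. fsupp (g p))"
proof
  fix q assume q: "q \<in> fsupp (lin_ext u g)"
  show "q \<in> (\<Union>p\<in>fsupp u. fsupp (g p))"
  proof (rule ccontr)
    assume "q \<notin> (\<Union>p\<in>fsupp u. fsupp (g p))"
    then have "\<forall>p\<in>fsupp u. g p q = 0" by (auto simp: fsupp_def)
    then have "lin_ext u g q = 0" by (simp add: lin_ext_def)
    with q show False by (simp add: fsupp_def)
  qed
qed

lemma lin_ext_finsupp_on:
  assumes "u \<in> finsupp_on (M \<times> N)" "\<And>a b. a \<in> M \<Longrightarrow> b \<in> N \<Longrightarrow> g (a, b) \<in> finsupp_on S"
  shows "lin_ext u g \<in> finsupp_on S"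
proof -
  have "\<forall>p\<in>fsupp u. g p \<in> finsupp_on S"
    using assms finsupp_on_fsupp_pair by fastforce
  then have "finite (\<Union>p\<in>fsupp u. fsupp (g p))" "(\<Union>p\<in>fsupp u. fsupp (g p)) \<subseteq> S"
    using assms(1) by (auto simp: finsupp_on_def)
  then show ?thesis
    using fsupp_lin_ext[of u g] by (auto simp: finsupp_on_def intro: finite_subset)
qed

lemma lin_ext_lin_ext:
  assumes "finite (fsupp u)" "\<And>p. p \<in> fsupp u \<Longrightarrow> finite (fsupp (f p))"
  shows "lin_ext (lin_ext u f) g = lin_ext u (\<lambda>p. lin_ext (f p) g)"
proof
  fix q
  define T where "T = (\<Union>p\<in>fsupp u. fsupp (f p))"
  have T: "finite T" "fsupp (lin_ext u f) \<subseteq> T"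
    using assms fsupp_lin_ext[of u f] by (auto simp: T_def)
  have "lin_ext (lin_ext u f) g q = (\<Sum>t\<in>T. lin_ext u f t * g t q)"
    by (rule lin_ext_eq_sum[OF T])
  also have "\<dots> = (\<Sum>t\<in>T. \<Sum>p\<in>fsupp u. u p * f p t * g t q)"
    by (simp add: lin_ext_def sum_distrib_right)
  also have "\<dots> = (\<Sum>p\<in>fsupp u. \<Sum>t\<in>T. u p * f p t * g t q)"
    by (rule sum.swap)
  also have "\<dots> = (\<Sum>p\<in>fsupp u. u p * lin_ext (f p) g q)"
  proof (rule sum.cong[OF refl])
    fix p assume "p \<in> fsupp u"
    then have "fsupp (f p) \<subseteq> T" by (auto simp: T_def)
    then show "(\<Sum>t\<in>T. u p * f p t * g t q) = u p * lin_ext (f p) g q"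
      using T by (simp add: lin_ext_eq_sum sum_distrib_left mult.assoc)
  qed
  finally show "lin_ext (lin_ext u f) g q = lin_ext u (\<lambda>p. lin_ext (f p) g) q"
    by (simp add: lin_ext_def)
qed

lemma lin_ext_fdelta_right:
  assumes "finite (fsupp u)"
  shows "lin_ext u fdelta = u"
proof
  fix q
  have "lin_ext u fdelta q = (\<Sum>p\<in>fsupp u. if q = p then u p else 0)"
    unfolding lin_ext_def by (rule sum.cong) (auto simp: fdelta_def)
  also have "\<dots> = u q"
    using assms by (simp add: fsupp_def)
  finally show "lin_ext u fdelta q = u q" .
qed

section \<open>Quotients by spans of relations\<close>

lemma fspan_finite:
  assumes "\<And>g. g \<in> G \<Longrightarrow> finite (fsupp g)" "w \<in> fspan G"
  shows "finite (fsupp w)"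
  using assms(2) by induction (simp add: fsupp_def, simp_all add: assms(1))

lemma fspan_lin_ext:
  assumes "\<And>p. p \<in> fsupp u \<Longrightarrow> g p \<in> fspan G"
  shows "lin_ext u g \<in> fspan G"
proof (cases "finite (fsupp u)")
  case True
  have "(\<lambda>q. \<Sum>p\<in>S. u p * g p q) \<in> fspan G" if "finite S" "S \<subseteq> fsupp u" for S
    using that
  proof (induction S rule: finite_induct)
    case empty
    then show ?case by (simp add: fspan.zero)
  next
    case (insert p S)
    then have "(\<lambda>q. \<Sum>p\<in>insert p S. u p * g p q) = fadd (fscale (u p) (g p)) (\<lambda>q. \<Sum>p\<in>S. u p * g p q)"
      by (simp add: fadd_def fscale_def)
    then show ?case
      using insert assms by (simp add: fspan.add fspan.scale)
  qed
  then show ?thesis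
    using True by (simp add: lin_ext_def)
next
  case False
  then show ?thesis by (simp add: lin_ext_def fspan.zero)
qed

lemma fspan_mono: "G \<subseteq> G' \<Longrightarrow> w \<in> fspan G \<Longrightarrow> w \<in> fspan G'"
  by (erule fspan.induct) (auto intro: fspan.intros)

lemma fspan_lin_ext_map:
  assumes fin: "\<And>w. w \<in> G \<Longrightarrow> finite (fsupp w)"
    and gen: "\<And>w. w \<in> G \<Longrightarrow> lin_ext w g \<in> fspan G'"
    and w: "w \<in> fspan G"
  shows "lin_ext w g \<in> fspan G'"
  using w
proof induction
  case zero
  then show ?case by (simp add: lin_ext_zero fspan.zero)
next
  case (gen w)
  then show ?case by (rule assms(2))
next
  case (add u v)
  then show ?case
    using fspan_finite[OF fin add(1)] fspan_finite[OF fin add(2)] by (simp add: lin_ext_fadd fspan.add)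
next
  case (scale u c)
  then show ?case
    using fspan_finite[OF fin scale(1)] by (simp add: lin_ext_fscale fspan.scale)
qed

lemma equiv_trel:
  fixes G :: "('p \<Rightarrow> 'k::comm_ring_1) set"
  shows "equiv (finsupp_on S) (trel (finsupp_on S) G)"
proof (rule equivI)
  show "trel (finsupp_on S) G \<subseteq> finsupp_on S \<times> finsupp_on S"
    by (auto simp: trel_def)
next
  show "refl_on (finsupp_on S) (trel (finsupp_on S) G)"
  proof (rule refl_onI)
    fix u :: "'p \<Rightarrow> 'k" assume "u \<in> finsupp_on S"
    moreover have "fdiff u u = (\<lambda>_. 0)" by (simp add: fdiff_def)
    ultimately show "(u, u) \<in> trel (finsupp_on S) G" by (simp add: trel_def fspan.zero)
  qed
next
  show "sym (trel (finsupp_on S) G)"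
  proof (rule symI)
    fix u v :: "'p \<Rightarrow> 'k" assume "(u, v) \<in> trel (finsupp_on S) G"
    moreover have "fdiff v u = fscale (-1) (fdiff u v)" by (simp add: fdiff_def fscale_def fun_eq_iff)
    ultimately show "(v, u) \<in> trel (finsupp_on S) G" by (simp add: trel_def fspan.scale)
  qed
next
  show "trans (trel (finsupp_on S) G)"
  proof (rule transI)
    fix u v w :: "'p \<Rightarrow> 'k" assume "(u, v) \<in> trel (finsupp_on S) G" "(v, w) \<in> trel (finsupp_on S) G"
    moreover have "fdiff u w = fadd (fdiff u v) (fdiff v w)" by (simp add: fdiff_def fadd_def fun_eq_iff)
    ultimately show "(u, w) \<in> trel (finsupp_on S) G" by (simp add: trel_def fspan.add)
  qed
qed

lemma trel_sym: "(u, v) \<in> trel (finsupp_on S) G \<Longrightarrow> (v, u) \<in> trel (finsupp_on S) G"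
  using equiv_trel[of S G] by (auto simp: equiv_def dest: symD)

lemma trel_trans:
  "(u, v) \<in> trel (finsupp_on S) G \<Longrightarrow> (v, w) \<in> trel (finsupp_on S) G \<Longrightarrow> (u, w) \<in> trel (finsupp_on S) G"
  using equiv_trel[of S G] by (auto simp: equiv_def dest: transD)

lemma trel_domain: "(u, v) \<in> trel D G \<Longrightarrow> u \<in> D \<and> v \<in> D"
  by (simp add: trel_def)

lemma trel_gen: "u \<in> D \<Longrightarrow> v \<in> D \<Longrightarrow> fdiff u v \<in> G \<Longrightarrow> (u, v) \<in> trel D G"
  by (simp add: trel_def fspan.gen)

lemma trel_fspan: "(u, v) \<in> trel D G \<Longrightarrow> fdiff u v \<in> fspan G"
  by (simp add: trel_def)

lemma trel_mono: "G \<subseteq> G' \<Longrightarrow> (u, v) \<in> trel D G \<Longrightarrow> (u, v) \<in> trel D G'"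
  by (auto simp: trel_def intro: fspan_mono)

lemma trel_fadd:
  assumes "(u, u') \<in> trel (finsupp_on S) G" "(v, v') \<in> trel (finsupp_on S) G"
  shows "(fadd u v, fadd u' v') \<in> trel (finsupp_on S) G"
proof -
  have "fdiff (fadd u v) (fadd u' v') = fadd (fdiff u u') (fdiff v v')"
    by (simp add: fdiff_def fadd_def fun_eq_iff)
  then show ?thesis
    using assms by (auto simp: trel_def fspan.add finsupp_on_fadd)
qed

lemma trel_fscale:
  assumes "(u, u') \<in> trel (finsupp_on S) G"
  shows "(fscale c u, fscale c u') \<in> trel (finsupp_on S) G"
proof -
  have "fdiff (fscale c u) (fscale c u') = fscale c (fdiff u u')"
    by (simp add: fdiff_def fscale_def right_diff_distrib fun_eq_iff)
  then show ?thesis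
    using assms by (auto simp: trel_def fspan.scale finsupp_on_fscale)
qed

lemma trel_lin_ext_cong:
  assumes u: "u \<in> finsupp_on (M \<times> N)"
    and r: "\<And>a b. a \<in> M \<Longrightarrow> b \<in> N \<Longrightarrow> (g (a, b), g' (a, b)) \<in> trel (finsupp_on S) G"
  shows "(lin_ext u g, lin_ext u g') \<in> trel (finsupp_on S) G"
proof -
  have "lin_ext u g \<in> finsupp_on S" "lin_ext u g' \<in> finsupp_on S"
    using r by (auto intro!: lin_ext_finsupp_on[OF u] dest: trel_domain)
  moreover have "lin_ext u (\<lambda>p. fdiff (g p) (g' p)) \<in> fspan G"
  proof (rule fspan_lin_ext)
    fix p assume "p \<in> fsupp u"
    then obtain a b where "p = (a, b)" "a \<in> M" "b \<in> N"
      using finsupp_on_fsupp_pair[OF u] by (cases p) blast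
    then show "fdiff (g p) (g' p) \<in> fspan G"
      using r by (simp add: trel_def)
  qed
  ultimately show ?thesis
    by (simp add: trel_def lin_ext_fdiff_fun)
qed

lemma trel_lin_ext_map:
  assumes uv: "(u, v) \<in> trel (finsupp_on (M \<times> N)) G"
    and fin: "\<And>w. w \<in> G \<Longrightarrow> finite (fsupp w)"
    and g: "\<And>a b. a \<in> M \<Longrightarrow> b \<in> N \<Longrightarrow> g (a, b) \<in> finsupp_on S"
    and gen: "\<And>w. w \<in> G \<Longrightarrow> lin_ext w g \<in> fspan G'"
  shows "(lin_ext u g, lin_ext v g) \<in> trel (finsupp_on S) G'"
proof -
  have u: "u \<in> finsupp_on (M \<times> N)" and v: "v \<in> finsupp_on (M \<times> N)"
    using uv by (auto simp: trel_def)
  have "lin_ext (fdiff u v) g \<in> fspan G'"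
    using uv by (intro fspan_lin_ext_map[OF fin gen]) (auto simp: trel_def)
  moreover have "lin_ext u g \<in> finsupp_on S" "lin_ext v g \<in> finsupp_on S"
    using u v g by (auto intro: lin_ext_finsupp_on)
  ultimately show ?thesis
    using u v by (simp add: trel_def lin_ext_fdiff finsupp_on_finite)
qed

lemma krel2_eq_trel: "krel2 sa sb M N = trel (finsupp_on (M \<times> N)) (gens2 sa sb M N)"
  by (simp add: krel2_def free2_eq_finsupp_on)

lemma brel_eq_trel: "brel sa m B M N = trel (finsupp_on (M \<times> N)) (gens2 sa sa M N \<union> balgens m B M N)"
  by (simp add: brel_def free2_eq_finsupp_on)

lemma equiv_krel2: "equiv (finsupp_on (M \<times> N)) (krel2 sa sb M N)"
  unfolding krel2_eq_trel by (rule equiv_trel)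

lemma equiv_brel: "equiv (finsupp_on (M \<times> N)) (brel sa m B M N)"
  unfolding brel_eq_trel by (rule equiv_trel)

lemma tensK_eq_quotient: "tensK sa sb M N = finsupp_on (M \<times> N) // krel2 sa sb M N"
  by (simp add: tensK_def free2_eq_finsupp_on)

lemma tensB_eq_quotient: "tensB sa m B M N = finsupp_on (M \<times> N) // brel sa m B M N"
  by (simp add: tensB_def free2_eq_finsupp_on)

lemma krel2_into_brel: "(u, v) \<in> krel2 sa sa M N \<Longrightarrow> (u, v) \<in> brel sa m B M N"
  unfolding krel2_eq_trel brel_eq_trel by (erule trel_mono[rotated]) simp

lemma krel2_add_fst:
  "\<lbrakk>a \<in> M; a' \<in> M; a + a' \<in> M; b \<in> N\<rbrakk> \<Longrightarrow>
   (fdelta (a + a', b), fadd (fdelta (a, b)) (fdelta (a', b))) \<in> krel2 sa sb M N"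
  unfolding krel2_eq_trel gens2_def by (intro trel_gen finsupp_on_fdelta finsupp_on_fadd) blast+

lemma krel2_add_snd:
  "\<lbrakk>a \<in> M; b \<in> N; b' \<in> N; b + b' \<in> N\<rbrakk> \<Longrightarrow>
   (fdelta (a, b + b'), fadd (fdelta (a, b)) (fdelta (a, b'))) \<in> krel2 sa sb M N"
  unfolding krel2_eq_trel gens2_def by (intro trel_gen finsupp_on_fdelta finsupp_on_fadd) blast+

lemma krel2_scale_fst:
  "\<lbrakk>a \<in> M; sa c a \<in> M; b \<in> N\<rbrakk> \<Longrightarrow>
   (fdelta (sa c a, b), fscale c (fdelta (a, b))) \<in> krel2 sa sb M N"
  unfolding krel2_eq_trel gens2_def by (intro trel_gen finsupp_on_fdelta finsupp_on_fscale) blast+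

lemma krel2_scale_snd:
  "\<lbrakk>a \<in> M; b \<in> N; sb c b \<in> N\<rbrakk> \<Longrightarrow>
   (fdelta (a, sb c b), fscale c (fdelta (a, b))) \<in> krel2 sa sb M N"
  unfolding krel2_eq_trel gens2_def by (intro trel_gen finsupp_on_fdelta finsupp_on_fscale) blast+

lemma brel_balanced:
  "\<lbrakk>a \<in> M; \<beta> \<in> B; a' \<in> N; m a \<beta> \<in> M; m \<beta> a' \<in> N\<rbrakk> \<Longrightarrow>
   (fdelta (m a \<beta>, a'), fdelta (a, m \<beta> a')) \<in> brel sa m B M N"
  unfolding brel_eq_trel balgens_def by (intro trel_gen finsupp_on_fdelta UnI2) blast+

definition bilinear_mod ::
    "('k::comm_ring_1 \<Rightarrow> 'a::ab_group_add \<Rightarrow> 'a) \<Rightarrow> ('k \<Rightarrow> 'b::ab_group_add \<Rightarrow> 'b) \<Rightarrow> 'a set \<Rightarrow> 'b set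
     \<Rightarrow> (('p \<Rightarrow> 'k) \<times> ('p \<Rightarrow> 'k)) set \<Rightarrow> ('a \<times> 'b \<Rightarrow> 'p \<Rightarrow> 'k) \<Rightarrow> bool" where
  "bilinear_mod sa sb M N r g \<longleftrightarrow>
     (\<forall>a\<in>M. \<forall>a'\<in>M. \<forall>b\<in>N. (g (a + a', b), fadd (g (a, b)) (g (a', b))) \<in> r) \<and>
     (\<forall>a\<in>M. \<forall>b\<in>N. \<forall>b'\<in>N. (g (a, b + b'), fadd (g (a, b)) (g (a, b'))) \<in> r) \<and>
     (\<forall>c. \<forall>a\<in>M. \<forall>b\<in>N. (g (sa c a, b), fscale c (g (a, b))) \<in> r) \<and>
     (\<forall>c. \<forall>a\<in>M. \<forall>b\<in>N. (g (a, sb c b), fscale c (g (a, b))) \<in> r)"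

lemma bilinear_modI:
  assumes "\<And>a a' b. a \<in> M \<Longrightarrow> a' \<in> M \<Longrightarrow> b \<in> N \<Longrightarrow> (g (a + a', b), fadd (g (a, b)) (g (a', b))) \<in> r"
    and "\<And>a b b'. a \<in> M \<Longrightarrow> b \<in> N \<Longrightarrow> b' \<in> N \<Longrightarrow> (g (a, b + b'), fadd (g (a, b)) (g (a, b'))) \<in> r"
    and "\<And>c a b. a \<in> M \<Longrightarrow> b \<in> N \<Longrightarrow> (g (sa c a, b), fscale c (g (a, b))) \<in> r"
    and "\<And>c a b. a \<in> M \<Longrightarrow> b \<in> N \<Longrightarrow> (g (a, sb c b), fscale c (g (a, b))) \<in> r"
  shows "bilinear_mod sa sb M N r g"
  using assms by (simp add: bilinear_mod_def)

lemma gens2_lin_ext: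
  assumes g: "bilinear_mod sa sb M N (trel D G) g" and w: "w \<in> gens2 sa sb M N"
  shows "lin_ext w g \<in> fspan G"
proof -
  have gen: "lin_ext (fdiff (fdelta p) w') g \<in> fspan G"
    if "(g p, lin_ext w' g) \<in> trel D G" "finite (fsupp w')" for p w'
    using that by (simp add: lin_ext_fdiff lin_ext_fdelta trel_fspan)
  from w show ?thesis
    unfolding gens2_def
    by (elim UnE CollectE exE conjE)
       (use g in \<open>auto simp: bilinear_mod_def lin_ext_fadd lin_ext_fscale lin_ext_fdelta intro!: gen\<close>)
qed

lemma balgens_lin_ext:
  assumes g: "\<And>a \<beta> a'. a \<in> M \<Longrightarrow> \<beta> \<in> B \<Longrightarrow> a' \<in> N \<Longrightarrow> (g (m a \<beta>, a'), g (a, m \<beta> a')) \<in> trel D G"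
    and w: "w \<in> balgens m B M N"
  shows "lin_ext w g \<in> fspan G"
  using w unfolding balgens_def
  by (elim CollectE exE conjE) (simp add: lin_ext_fdiff lin_ext_fdelta trel_fspan[OF g])

lemma gens2_finite: "w \<in> gens2 sa sb M N \<Longrightarrow> finite (fsupp w)"
  unfolding gens2_def by auto

lemma balgens_finite: "w \<in> balgens m B M N \<Longrightarrow> finite (fsupp w)"
  unfolding balgens_def by auto

lemma krel2_lin_ext:
  assumes "(u, v) \<in> krel2 sa sb M N"
    and "\<And>a b. a \<in> M \<Longrightarrow> b \<in> N \<Longrightarrow> g (a, b) \<in> finsupp_on S"
    and "bilinear_mod sa sb M N (trel (finsupp_on S) G) g"
  shows "(lin_ext u g, lin_ext v g) \<in> trel (finsupp_on S) G"
  using assms unfolding krel2_eq_trel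
  by (intro trel_lin_ext_map[where G = "gens2 sa sb M N"] gens2_finite gens2_lin_ext)

lemma brel_lin_ext:
  assumes uv: "(u, v) \<in> brel sa m B M N"
    and g: "\<And>a b. a \<in> M \<Longrightarrow> b \<in> N \<Longrightarrow> g (a, b) \<in> finsupp_on S"
    and bilin: "bilinear_mod sa sa M N (trel (finsupp_on S) G) g"
    and bal: "\<And>a \<beta> a'. a \<in> M \<Longrightarrow> \<beta> \<in> B \<Longrightarrow> a' \<in> N \<Longrightarrow>
      (g (m a \<beta>, a'), g (a, m \<beta> a')) \<in> trel (finsupp_on S) G"
  shows "(lin_ext u g, lin_ext v g) \<in> trel (finsupp_on S) G"
proof (rule trel_lin_ext_map[where G = "gens2 sa sa M N \<union> balgens m B M N"])
  fix w assume "w \<in> gens2 sa sa M N \<union> balgens m B M N"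
  then show "finite (fsupp w)" and "lin_ext w g \<in> fspan G"
    by (auto intro: gens2_finite balgens_finite gens2_lin_ext[OF bilin] balgens_lin_ext[OF bal])
qed (use uv g in \<open>simp_all add: brel_eq_trel\<close>)

section \<open>Tensor products of maps\<close>

definition lin_closed :: "('k \<Rightarrow> 'a::ab_group_add \<Rightarrow> 'a) \<Rightarrow> 'a set \<Rightarrow> bool" where
  "lin_closed sa M \<longleftrightarrow> (\<forall>a\<in>M. \<forall>b\<in>M. a + b \<in> M) \<and> (\<forall>c. \<forall>a\<in>M. sa c a \<in> M)"

definition tensor_map :: "('a \<Rightarrow> 'c) \<Rightarrow> ('b \<Rightarrow> 'd) \<Rightarrow> ('a \<times> 'b \<Rightarrow> 'k::comm_ring_1) \<Rightarrow> 'c \<times> 'd \<Rightarrow> 'k" where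
  "tensor_map \<phi> \<psi> u = lin_ext u (\<lambda>(a, b). fdelta (\<phi> a, \<psi> b))"

lemma tensor_map_fdelta [simp]: "tensor_map \<phi> \<psi> (fdelta (a, b)) = fdelta (\<phi> a, \<psi> b)"
  by (simp add: tensor_map_def lin_ext_fdelta)

lemma tensor_map_fadd:
  "finite (fsupp u) \<Longrightarrow> finite (fsupp v) \<Longrightarrow> tensor_map \<phi> \<psi> (fadd u v) = fadd (tensor_map \<phi> \<psi> u) (tensor_map \<phi> \<psi> v)"
  by (simp add: tensor_map_def lin_ext_fadd)

lemma tensor_map_fscale: "finite (fsupp u) \<Longrightarrow> tensor_map \<phi> \<psi> (fscale c u) = fscale c (tensor_map \<phi> \<psi> u)"
  by (simp add: tensor_map_def lin_ext_fscale)

lemma finite_fsupp_tensor_map: "finite (fsupp u) \<Longrightarrow> finite (fsupp (tensor_map \<phi> \<psi> u))"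
  unfolding tensor_map_def using fsupp_lin_ext by (rule finite_subset) (auto split: prod.split)

lemma tensor_map_finsupp_on:
  assumes "u \<in> finsupp_on (M \<times> N)" "\<And>a. a \<in> M \<Longrightarrow> \<phi> a \<in> M'" "\<And>b. b \<in> N \<Longrightarrow> \<psi> b \<in> N'"
  shows "tensor_map \<phi> \<psi> u \<in> finsupp_on (M' \<times> N')"
  unfolding tensor_map_def using assms by (auto intro!: lin_ext_finsupp_on finsupp_on_fdelta)

lemma tensor_map_lin_ext:
  assumes "finite (fsupp u)" "\<And>p. p \<in> fsupp u \<Longrightarrow> finite (fsupp (f p))"
  shows "tensor_map \<phi> \<psi> (lin_ext u f) = lin_ext u (\<lambda>p. tensor_map \<phi> \<psi> (f p))"
  unfolding tensor_map_def by (rule lin_ext_lin_ext[OF assms])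

lemma lin_ext_tensor_map:
  assumes "finite (fsupp u)"
  shows "lin_ext (tensor_map \<phi> \<psi> u) g = lin_ext u (\<lambda>(a, b). g (\<phi> a, \<psi> b))"
  unfolding tensor_map_def
  by (subst lin_ext_lin_ext) (auto simp: assms lin_ext_fdelta split: prod.split intro: lin_ext_cong)

lemma tensor_map_tensor_map:
  "finite (fsupp u) \<Longrightarrow> tensor_map \<phi>' \<psi>' (tensor_map \<phi> \<psi> u) = tensor_map (\<lambda>a. \<phi>' (\<phi> a)) (\<lambda>b. \<psi>' (\<psi> b)) u"
  by (simp add: tensor_map_def[of \<phi>' \<psi>'] lin_ext_tensor_map) (simp add: tensor_map_def)

lemma tensor_map_cong:
  assumes "u \<in> finsupp_on (M \<times> N)" "\<And>a. a \<in> M \<Longrightarrow> \<phi> a = \<phi>' a" "\<And>b. b \<in> N \<Longrightarrow> \<psi> b = \<psi>' b"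
  shows "tensor_map \<phi> \<psi> u = tensor_map \<phi>' \<psi>' u"
  unfolding tensor_map_def using assms finsupp_on_fsupp_pair[OF assms(1)] by (auto intro!: lin_ext_cong_pair)

lemma tensor_map_ident: "finite (fsupp u) \<Longrightarrow> tensor_map (\<lambda>a. a) (\<lambda>b. b) u = u"
  by (simp add: tensor_map_def lin_ext_fdelta_right)

lemma tensor_map_krel2:
  assumes uv: "(u, v) \<in> krel2 sa sb M N"
    and \<phi>: "klinear_on sa sa' M M' \<phi>" and \<psi>: "klinear_on sb sb' N N' \<psi>"
    and M': "lin_closed sa' M'" and N': "lin_closed sb' N'"
  shows "(tensor_map \<phi> \<psi> u, tensor_map \<phi> \<psi> v) \<in> krel2 sa' sb' M' N'"
  unfolding tensor_map_def krel2_eq_trel[of sa' sb']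
proof (rule krel2_lin_ext[OF uv])
  show "bilinear_mod sa sb M N (trel (finsupp_on (M' \<times> N')) (gens2 sa' sb' M' N'))
          (\<lambda>(a, b). fdelta (\<phi> a, \<psi> b))"
    using \<phi> \<psi> M' N'
    by (intro bilinear_modI)
       (simp_all add: klinear_on_def lin_closed_def krel2_add_fst krel2_add_snd krel2_scale_fst
         krel2_scale_snd flip: krel2_eq_trel)
qed (use \<phi> \<psi> in \<open>simp add: klinear_on_def finsupp_on_fdelta\<close>)

lemma tensor_map_brel:
  assumes uv: "(u, v) \<in> brel sa m B M N"
    and \<phi>: "klinear_on sa sa M M' \<phi>" and \<psi>: "klinear_on sa sa N N' \<psi>"
    and M': "lin_closed sa M'" and N': "lin_closed sa N'"
    and \<phi>_bal: "\<And>a \<beta>. a \<in> M \<Longrightarrow> \<beta> \<in> B \<Longrightarrow> m a \<beta> \<in> M \<and> \<phi> (m a \<beta>) = m (\<phi> a) \<beta> \<and> m (\<phi> a) \<beta> \<in> M'"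
    and \<psi>_bal: "\<And>b \<beta>. b \<in> N \<Longrightarrow> \<beta> \<in> B \<Longrightarrow> m \<beta> b \<in> N \<and> \<psi> (m \<beta> b) = m \<beta> (\<psi> b) \<and> m \<beta> (\<psi> b) \<in> N'"
  shows "(tensor_map \<phi> \<psi> u, tensor_map \<phi> \<psi> v) \<in> brel sa m B M' N'"
  unfolding tensor_map_def brel_eq_trel[of sa m B M' N']
proof (rule brel_lin_ext[OF uv])
  show "bilinear_mod sa sa M N (trel (finsupp_on (M' \<times> N')) (gens2 sa sa M' N' \<union> balgens m B M' N'))
          (\<lambda>(a, b). fdelta (\<phi> a, \<psi> b))"
    using \<phi> \<psi> M' N'
    by (intro bilinear_modI)
       (simp_all add: klinear_on_def lin_closed_def krel2_into_brel krel2_add_fst krel2_add_snd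
         krel2_scale_fst krel2_scale_snd flip: brel_eq_trel)
  fix a \<beta> b assume "a \<in> M" "\<beta> \<in> B" "b \<in> N"
  then show "((\<lambda>(a, b). fdelta (\<phi> a, \<psi> b)) (m a \<beta>, b), (\<lambda>(a, b). fdelta (\<phi> a, \<psi> b)) (a, m \<beta> b))
      \<in> trel (finsupp_on (M' \<times> N')) (gens2 sa sa M' N' \<union> balgens m B M' N')"
    using \<phi> \<psi> \<phi>_bal \<psi>_bal by (simp add: klinear_on_def brel_balanced flip: brel_eq_trel)
qed (use \<phi> \<psi> in \<open>simp add: klinear_on_def finsupp_on_fdelta\<close>)

lemma tensor_map_add_fst:
  assumes u: "u \<in> finsupp_on (M \<times> N)"
    and \<phi>: "\<And>a. a \<in> M \<Longrightarrow> \<phi> a \<in> M'" and \<phi>': "\<And>a. a \<in> M \<Longrightarrow> \<phi>' a \<in> M'"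
    and \<psi>: "\<And>b. b \<in> N \<Longrightarrow> \<psi> b \<in> N'" and M': "lin_closed sa M'"
  shows "(tensor_map (\<lambda>a. \<phi> a + \<phi>' a) \<psi> u, fadd (tensor_map \<phi> \<psi> u) (tensor_map \<phi>' \<psi> u)) \<in> krel2 sa sb M' N'"
  unfolding tensor_map_def lin_ext_fadd_fun[symmetric] krel2_eq_trel
  by (rule trel_lin_ext_cong[OF u])
     (use \<phi> \<phi>' \<psi> M' in \<open>simp add: lin_closed_def krel2_add_fst flip: krel2_eq_trel\<close>)

lemma tensor_map_scale_fst:
  assumes u: "u \<in> finsupp_on (M \<times> N)"
    and \<phi>: "\<And>a. a \<in> M \<Longrightarrow> \<phi> a \<in> M'" and \<psi>: "\<And>b. b \<in> N \<Longrightarrow> \<psi> b \<in> N'" and M': "lin_closed sa M'"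
  shows "(tensor_map (\<lambda>a. sa c (\<phi> a)) \<psi> u, fscale c (tensor_map \<phi> \<psi> u)) \<in> krel2 sa sb M' N'"
  unfolding tensor_map_def lin_ext_fscale_fun[symmetric] krel2_eq_trel
  by (rule trel_lin_ext_cong[OF u])
     (use \<phi> \<psi> M' in \<open>simp add: lin_closed_def krel2_scale_fst flip: krel2_eq_trel\<close>)

lemma tensor_map_add_snd:
  assumes u: "u \<in> finsupp_on (M \<times> N)"
    and \<phi>: "\<And>a. a \<in> M \<Longrightarrow> \<phi> a \<in> M'"
    and \<psi>: "\<And>b. b \<in> N \<Longrightarrow> \<psi> b \<in> N'" and \<psi>': "\<And>b. b \<in> N \<Longrightarrow> \<psi>' b \<in> N'" and N': "lin_closed sb N'"
  shows "(tensor_map \<phi> (\<lambda>b. \<psi> b + \<psi>' b) u, fadd (tensor_map \<phi> \<psi> u) (tensor_map \<phi> \<psi>' u)) \<in> krel2 sa sb M' N'"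
  unfolding tensor_map_def lin_ext_fadd_fun[symmetric] krel2_eq_trel
  by (rule trel_lin_ext_cong[OF u])
     (use \<phi> \<psi> \<psi>' N' in \<open>simp add: lin_closed_def krel2_add_snd flip: krel2_eq_trel\<close>)

lemma tensor_map_scale_snd:
  assumes u: "u \<in> finsupp_on (M \<times> N)"
    and \<phi>: "\<And>a. a \<in> M \<Longrightarrow> \<phi> a \<in> M'" and \<psi>: "\<And>b. b \<in> N \<Longrightarrow> \<psi> b \<in> N'" and N': "lin_closed sb N'"
  shows "(tensor_map \<phi> (\<lambda>b. sb c (\<psi> b)) u, fscale c (tensor_map \<phi> \<psi> u)) \<in> krel2 sa sb M' N'"
  unfolding tensor_map_def lin_ext_fscale_fun[symmetric] krel2_eq_trel
  by (rule trel_lin_ext_cong[OF u])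
     (use \<phi> \<psi> N' in \<open>simp add: lin_closed_def krel2_scale_snd flip: krel2_eq_trel\<close>)

lemma qmap_class:
  assumes r: "equiv D r" and r': "equiv D' r'"
    and resp: "\<And>u v. (u, v) \<in> r \<Longrightarrow> (f u, f v) \<in> r'" and u: "u \<in> D"
  shows "qmap f r' (r `` {u}) = r' `` {f u}"
proof -
  have "r' `` {f v} = r' `` {f u}" if "v \<in> r `` {u}" for v
    using that resp equiv_class_eq[OF r'] by force
  moreover have "u \<in> r `` {u}"
    by (rule equiv_class_self[OF r u])
  ultimately show ?thesis
    unfolding qmap_def by blast
qed

lemma qmap_in_quotient:
  assumes r: "equiv D r" and r': "equiv D' r'"
    and resp: "\<And>u v. (u, v) \<in> r \<Longrightarrow> (f u, f v) \<in> r'" and C: "C \<in> D // r"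
  shows "qmap f r' C \<in> D' // r'"
proof -
  obtain u where u: "u \<in> D" "C = r `` {u}"
    using C by (auto elim: quotientE)
  have "(f u, f u) \<in> r'"
    using resp u r by (simp add: equiv_def refl_on_def)
  then have "f u \<in> D'"
    using r' by (auto simp: equiv_def refl_on_def)
  then show ?thesis
    using u qmap_class[OF r r' resp] by (simp add: quotientI)
qed

lemma bij_betw_qmap:
  assumes r: "equiv D r" and r': "equiv D' r'"
    and resp: "\<And>u v. (u, v) \<in> r \<Longrightarrow> (f u, f v) \<in> r'"
    and resp': "\<And>u v. (u, v) \<in> r' \<Longrightarrow> (f' u, f' v) \<in> r"
    and inv: "\<And>u. u \<in> D \<Longrightarrow> (f' (f u), u) \<in> r"
    and inv': "\<And>v. v \<in> D' \<Longrightarrow> (f (f' v), v) \<in> r'"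
  shows "bij_betw (qmap f r') (D // r) (D' // r')"
proof (rule bij_betw_byWitness[where f' = "qmap f' r"])
  show "qmap f r' ` (D // r) \<subseteq> D' // r'" and "qmap f' r ` (D' // r') \<subseteq> D // r"
    using qmap_in_quotient[OF r r' resp] qmap_in_quotient[OF r' r resp'] by auto
  show "\<forall>C\<in>D // r. qmap f' r (qmap f r' C) = C"
  proof
    fix C assume "C \<in> D // r"
    then obtain u where u: "u \<in> D" "C = r `` {u}" by (auto elim: quotientE)
    have "f u \<in> D'" using resp[OF inv[OF u(1)]] r' by (auto simp: equiv_def refl_on_def)
    then show "qmap f' r (qmap f r' C) = C"
      using u inv[OF u(1)] qmap_class[OF r r' resp] qmap_class[OF r' r resp'] equiv_class_eq[OF r]
      by simp
  qed
  show "\<forall>C\<in>D' // r'. qmap f r' (qmap f' r C) = C"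
  proof
    fix C assume "C \<in> D' // r'"
    then obtain v where v: "v \<in> D'" "C = r' `` {v}" by (auto elim: quotientE)
    have "f' v \<in> D" using resp'[OF inv'[OF v(1)]] r by (auto simp: equiv_def refl_on_def)
    then show "qmap f r' (qmap f' r C) = C"
      using v inv'[OF v(1)] qmap_class[OF r r' resp] qmap_class[OF r' r resp'] equiv_class_eq[OF r']
      by simp
  qed
qed

lemma inj_on_qmapD:
  assumes r: "equiv D r" and r': "equiv D' r'"
    and resp: "\<And>u v. (u, v) \<in> r \<Longrightarrow> (f u, f v) \<in> r'"
    and inj: "inj_on (qmap f r') (D // r)"
    and u: "u \<in> D" and v: "v \<in> D" and fuv: "(f u, f v) \<in> r'"
  shows "(u, v) \<in> r"
proof -
  have "qmap f r' (r `` {u}) = qmap f r' (r `` {v})"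
    using qmap_class[OF r r' resp] u v fuv equiv_class_eq[OF r'] by simp
  then have "r `` {u} = r `` {v}"
    using inj u v by (auto dest: inj_onD intro: quotientI)
  then show ?thesis
    by (rule eq_equiv_class[OF _ r v])
qed

lemma qmap_surjD:
  assumes r: "equiv D r" and r': "equiv D' r'"
    and resp: "\<And>u v. (u, v) \<in> r \<Longrightarrow> (f u, f v) \<in> r'"
    and surj: "qmap f r' ` (D // r) = D' // r'"
    and v: "v \<in> D'"
  shows "\<exists>u\<in>D. (f u, v) \<in> r'"
proof -
  have "r' `` {v} \<in> qmap f r' ` (D // r)"
    using surj v by (simp add: quotientI)
  then obtain u where u: "u \<in> D" "r' `` {v} = qmap f r' (r `` {u})"
    by (auto elim: quotientE)
  then have "r' `` {v} = r' `` {f u}"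
    using qmap_class[OF r r' resp] by simp
  then show ?thesis
    using u eq_equiv_class[OF sym r' v] by blast
qed

lemma ex_left_inverse_iff_inj_on: "(\<exists>g. \<forall>x\<in>S. g (f x) = x) \<longleftrightarrow> inj_on f S"
  by (metis inj_on_inverseI inv_into_f_f)

lemma klinear_on_ident: "klinear_on sa sa M M (\<lambda>a. a)"
  by (simp add: klinear_on_def)

lemma klinear_on_comp:
  "klinear_on sa sb M N f \<Longrightarrow> klinear_on sb sc N P g \<Longrightarrow> klinear_on sa sc M P (\<lambda>a. g (f a))"
  by (simp add: klinear_on_def)

locale klinear_cat =
  fixes sc :: "'k::comm_ring_1 \<Rightarrow> 'a::ab_group_add \<Rightarrow> 'a" and X :: "'x set"
    and Hom :: "'x \<Rightarrow> 'x \<Rightarrow> 'a set" and cmp :: "'a \<Rightarrow> 'a \<Rightarrow> 'a" and ident :: "'x \<Rightarrow> 'a"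
  assumes klincat: "klincat sc X Hom cmp ident"
begin

lemma add_closed: "\<lbrakk>x \<in> X; y \<in> X; a \<in> Hom x y; b \<in> Hom x y\<rbrakk> \<Longrightarrow> a + b \<in> Hom x y"
  using klincat by (simp add: klincat_def)

lemma scale_closed: "\<lbrakk>x \<in> X; y \<in> X; a \<in> Hom x y\<rbrakk> \<Longrightarrow> sc c a \<in> Hom x y"
  using klincat by (simp add: klincat_def)

lemma lin_closed: "\<lbrakk>x \<in> X; y \<in> X\<rbrakk> \<Longrightarrow> lin_closed sc (Hom x y)"
  by (simp add: lin_closed_def add_closed scale_closed)

lemma comp_closed: "\<lbrakk>x \<in> X; y \<in> X; z \<in> X; a \<in> Hom x y; b \<in> Hom y z\<rbrakk> \<Longrightarrow> cmp a b \<in> Hom x z"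
  using klincat by (simp add: klincat_def)

lemma comp_add_right:
  "\<lbrakk>x \<in> X; y \<in> X; z \<in> X; a \<in> Hom x y; b \<in> Hom y z; b' \<in> Hom y z\<rbrakk> \<Longrightarrow> cmp a (b + b') = cmp a b + cmp a b'"
  using klincat by (simp add: klincat_def)

lemma comp_scale_right:
  "\<lbrakk>x \<in> X; y \<in> X; z \<in> X; a \<in> Hom x y; b \<in> Hom y z\<rbrakk> \<Longrightarrow> cmp a (sc c b) = sc c (cmp a b)"
  using klincat by (simp add: klincat_def)

lemma comp_assoc:
  "\<lbrakk>w \<in> X; x \<in> X; y \<in> X; z \<in> X; a \<in> Hom w x; b \<in> Hom x y; d \<in> Hom y z\<rbrakk> \<Longrightarrow>
   cmp (cmp a b) d = cmp a (cmp b d)"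
  using klincat by (simp add: klincat_def)

lemma ident_closed: "x \<in> X \<Longrightarrow> ident x \<in> Hom x x"
  using klincat by (simp add: klincat_def)

lemma ident_left: "\<lbrakk>x \<in> X; y \<in> X; a \<in> Hom x y\<rbrakk> \<Longrightarrow> cmp (ident x) a = a"
  using klincat by (simp add: klincat_def)

lemma ident_right: "\<lbrakk>x \<in> X; y \<in> X; a \<in> Hom x y\<rbrakk> \<Longrightarrow> cmp a (ident y) = a"
  using klincat by (simp add: klincat_def)

lemma klinear_comp_right:
  "\<lbrakk>x \<in> X; y \<in> X; z \<in> X; b \<in> Hom y z\<rbrakk> \<Longrightarrow> klinear_on sc sc (Hom x y) (Hom x z) (\<lambda>a. cmp a b)"
  using klincat by (simp add: klincat_def klinear_on_def)

lemma klinear_comp_left: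
  "\<lbrakk>x \<in> X; y \<in> X; z \<in> X; a \<in> Hom x y\<rbrakk> \<Longrightarrow> klinear_on sc sc (Hom y z) (Hom x z) (cmp a)"
  using klincat by (simp add: klincat_def klinear_on_def)

end

locale linear_coaction = A: klinear_cat sa X A ma ua + H: klinear_cat sh X H mh uh
  for sa :: "'k::comm_ring_1 \<Rightarrow> 'a::ab_group_add \<Rightarrow> 'a" and X :: "'x set" and A ma ua
    and sh :: "'k \<Rightarrow> 'h::ab_group_add \<Rightarrow> 'h" and H mh uh +
  fixes rho :: "'x \<Rightarrow> 'x \<Rightarrow> 'a \<Rightarrow> 'a \<times> 'h \<Rightarrow> 'k"
  assumes rho_qlinear: "\<lbrakk>x \<in> X; y \<in> X\<rbrakk> \<Longrightarrow>
      qlinear_on sa (A x y) (free2 (A x y) (H x y)) (krel2 sa sh (A x y) (H x y)) (rho x y)"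
    and rho_mult: "\<lbrakk>x \<in> X; y \<in> X; z \<in> X; a \<in> A x y; b \<in> A y z\<rbrakk> \<Longrightarrow>
      (rho x z (ma a b),
       lin_ext (rho x y a) (\<lambda>(a0, h). lin_ext (rho y z b) (\<lambda>(b0, g). fdelta (ma a0 b0, mh h g))))
      \<in> krel2 sa sh (A x z) (H x z)"
begin

abbreviation B :: "'x \<Rightarrow> 'a set" where
  "B \<equiv> coinv sh H uh sa A rho"

lemma rho_in: "\<lbrakk>x \<in> X; y \<in> X; a \<in> A x y\<rbrakk> \<Longrightarrow> rho x y a \<in> finsupp_on (A x y \<times> H x y)"
  using rho_qlinear by (simp add: qlinear_on_def free2_eq_finsupp_on)

lemma rho_finite: "\<lbrakk>x \<in> X; y \<in> X; a \<in> A x y\<rbrakk> \<Longrightarrow> finite (fsupp (rho x y a))"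
  using rho_in by (rule finsupp_on_finite)

lemma rho_add:
  "\<lbrakk>x \<in> X; y \<in> X; a \<in> A x y; a' \<in> A x y\<rbrakk> \<Longrightarrow>
   (rho x y (a + a'), fadd (rho x y a) (rho x y a')) \<in> krel2 sa sh (A x y) (H x y)"
  using rho_qlinear by (simp add: qlinear_on_def)

lemma rho_scale:
  "\<lbrakk>x \<in> X; y \<in> X; a \<in> A x y\<rbrakk> \<Longrightarrow> (rho x y (sa c a), fscale c (rho x y a)) \<in> krel2 sa sh (A x y) (H x y)"
  using rho_qlinear by (simp add: qlinear_on_def)

lemma rho_mult_tensor_map:
  "\<lbrakk>x \<in> X; y \<in> X; z \<in> X; a \<in> A x y; b \<in> A y z\<rbrakk> \<Longrightarrow>
   (rho x z (ma a b), lin_ext (rho x y a) (\<lambda>(a0, h). tensor_map (ma a0) (mh h) (rho y z b)))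
   \<in> krel2 sa sh (A x z) (H x z)"
  using rho_mult by (simp add: tensor_map_def)

lemma coinv_in: "\<beta> \<in> B x \<Longrightarrow> \<beta> \<in> A x x"
  by (simp add: coinv_def)

lemma coinv_rho: "\<beta> \<in> B x \<Longrightarrow> (rho x x \<beta>, fdelta (\<beta>, uh x)) \<in> krel2 sa sh (A x x) (H x x)"
  by (simp add: coinv_def)

section \<open>The canonical map\<close>

definition rmul_fst :: "'a \<Rightarrow> ('a \<times> 'h \<Rightarrow> 'k) \<Rightarrow> 'a \<times> 'h \<Rightarrow> 'k" where
  "rmul_fst b = tensor_map (\<lambda>c. ma c b) (\<lambda>h. h)"

definition rmul_snd :: "'a \<Rightarrow> ('a \<times> 'a \<Rightarrow> 'k) \<Rightarrow> 'a \<times> 'a \<Rightarrow> 'k" where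
  "rmul_snd b = tensor_map (\<lambda>l. l) (\<lambda>r. ma r b)"

lemma rmul_fst_fdelta: "rmul_fst b (fdelta (c, h)) = fdelta (ma c b, h)"
  by (simp add: rmul_fst_def)

lemma rmul_snd_fdelta: "rmul_snd b (fdelta (l, r)) = fdelta (l, ma r b)"
  by (simp add: rmul_snd_def)

lemma rmul_fst_in:
  "\<lbrakk>w \<in> X; y \<in> X; z \<in> X; u \<in> finsupp_on (A z w \<times> N); b \<in> A w y\<rbrakk> \<Longrightarrow>
   rmul_fst b u \<in> finsupp_on (A z y \<times> N)"
  unfolding rmul_fst_def by (erule tensor_map_finsupp_on) (auto intro: A.comp_closed)

lemma rmul_snd_in:
  "\<lbrakk>w \<in> X; x \<in> X; y \<in> X; u \<in> finsupp_on (M \<times> A x w); b \<in> A w y\<rbrakk> \<Longrightarrow>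
   rmul_snd b u \<in> finsupp_on (M \<times> A x y)"
  unfolding rmul_snd_def by (erule tensor_map_finsupp_on) (auto intro: A.comp_closed)

lemma rmul_fst_krel2:
  assumes "w \<in> X" "x \<in> X" "y \<in> X" "z \<in> X" "b \<in> A w y"
    and "(u, v) \<in> krel2 sa sh (A z w) (H z x)"
  shows "(rmul_fst b u, rmul_fst b v) \<in> krel2 sa sh (A z y) (H z x)"
  unfolding rmul_fst_def
  by (rule tensor_map_krel2[OF assms(6)]) (use assms in \<open>auto intro: A.klinear_comp_right klinear_on_ident A.lin_closed H.lin_closed\<close>)

lemma rmul_snd_brel:
  assumes X: "w \<in> X" "x \<in> X" "y \<in> X" "z \<in> X" and b: "b \<in> A w y"
    and uv: "(u, v) \<in> brel sa ma (B x) (A z x) (A x w)"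
  shows "(rmul_snd b u, rmul_snd b v) \<in> brel sa ma (B x) (A z x) (A x y)"
  unfolding rmul_snd_def
proof (rule tensor_map_brel[OF uv klinear_on_ident A.klinear_comp_right A.lin_closed A.lin_closed])
  fix a \<beta> assume "a \<in> A z x" "\<beta> \<in> B x"
  then show "ma a \<beta> \<in> A z x \<and> ma a \<beta> = ma a \<beta> \<and> ma a \<beta> \<in> A z x"
    using X by (auto intro: A.comp_closed dest: coinv_in)
next
  fix r \<beta> assume "r \<in> A x w" "\<beta> \<in> B x"
  then show "ma \<beta> r \<in> A x w \<and> ma (ma \<beta> r) b = ma \<beta> (ma r b) \<and> ma \<beta> (ma r b) \<in> A x y"
    using X b by (auto intro: A.comp_closed A.comp_assoc dest: coinv_in)
qed (use X b in auto)

lemma rmul_fst_add: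
  assumes "w \<in> X" "y \<in> X" "z \<in> X" "x \<in> X" "u \<in> finsupp_on (A z w \<times> H z x)" "b \<in> A w y" "b' \<in> A w y"
  shows "(rmul_fst (b + b') u, fadd (rmul_fst b u) (rmul_fst b' u)) \<in> krel2 sa sh (A z y) (H z x)"
proof -
  have "rmul_fst (b + b') u = tensor_map (\<lambda>a. ma a b + ma a b') (\<lambda>h. h) u"
    unfolding rmul_fst_def using assms by (intro tensor_map_cong) (auto simp: A.comp_add_right)
  moreover have "(tensor_map (\<lambda>a. ma a b + ma a b') (\<lambda>h. h) u,
      fadd (tensor_map (\<lambda>a. ma a b) (\<lambda>h. h) u) (tensor_map (\<lambda>a. ma a b') (\<lambda>h. h) u)) \<in> krel2 sa sh (A z y) (H z x)"
    by (rule tensor_map_add_fst) (use assms in \<open>auto intro: A.comp_closed A.lin_closed\<close>)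
  ultimately show ?thesis
    by (simp add: rmul_fst_def)
qed

lemma rmul_fst_scale:
  assumes "w \<in> X" "y \<in> X" "z \<in> X" "x \<in> X" "u \<in> finsupp_on (A z w \<times> H z x)" "b \<in> A w y"
  shows "(rmul_fst (sa c b) u, fscale c (rmul_fst b u)) \<in> krel2 sa sh (A z y) (H z x)"
proof -
  have "rmul_fst (sa c b) u = tensor_map (\<lambda>a. sa c (ma a b)) (\<lambda>h. h) u"
    unfolding rmul_fst_def using assms by (intro tensor_map_cong) (auto simp: A.comp_scale_right)
  moreover have "(tensor_map (\<lambda>a. sa c (ma a b)) (\<lambda>h. h) u, fscale c (tensor_map (\<lambda>a. ma a b) (\<lambda>h. h) u))
      \<in> krel2 sa sh (A z y) (H z x)"
    by (rule tensor_map_scale_fst) (use assms in \<open>auto intro: A.comp_closed A.lin_closed\<close>)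
  ultimately show ?thesis
    by (simp add: rmul_fst_def)
qed

lemma rmul_snd_add:
  assumes "w \<in> X" "y \<in> X" "z \<in> X" "x \<in> X" "u \<in> finsupp_on (A z x \<times> A x w)" "b \<in> A w y" "b' \<in> A w y"
  shows "(rmul_snd (b + b') u, fadd (rmul_snd b u) (rmul_snd b' u)) \<in> brel sa ma (B x) (A z x) (A x y)"
proof -
  have "rmul_snd (b + b') u = tensor_map (\<lambda>l. l) (\<lambda>r. ma r b + ma r b') u"
    unfolding rmul_snd_def using assms by (intro tensor_map_cong) (auto simp: A.comp_add_right)
  moreover have "(tensor_map (\<lambda>l. l) (\<lambda>r. ma r b + ma r b') u,
      fadd (tensor_map (\<lambda>l. l) (\<lambda>r. ma r b) u) (tensor_map (\<lambda>l. l) (\<lambda>r. ma r b') u)) \<in> krel2 sa sa (A z x) (A x y)"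
    by (rule tensor_map_add_snd) (use assms in \<open>auto intro: A.comp_closed A.lin_closed\<close>)
  ultimately show ?thesis
    by (simp add: rmul_snd_def krel2_into_brel)
qed

lemma rmul_snd_scale:
  assumes "w \<in> X" "y \<in> X" "z \<in> X" "x \<in> X" "u \<in> finsupp_on (A z x \<times> A x w)" "b \<in> A w y"
  shows "(rmul_snd (sa c b) u, fscale c (rmul_snd b u)) \<in> brel sa ma (B x) (A z x) (A x y)"
proof -
  have "rmul_snd (sa c b) u = tensor_map (\<lambda>l. l) (\<lambda>r. sa c (ma r b)) u"
    unfolding rmul_snd_def using assms by (intro tensor_map_cong) (auto simp: A.comp_scale_right)
  moreover have "(tensor_map (\<lambda>l. l) (\<lambda>r. sa c (ma r b)) u, fscale c (tensor_map (\<lambda>l. l) (\<lambda>r. ma r b) u))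
      \<in> krel2 sa sa (A z x) (A x y)"
    by (rule tensor_map_scale_snd) (use assms in \<open>auto intro: A.comp_closed A.lin_closed\<close>)
  ultimately show ?thesis
    by (simp add: rmul_snd_def krel2_into_brel)
qed

lemma rmul_fst_rmul_fst:
  "\<lbrakk>w \<in> X; v \<in> X; y \<in> X; z \<in> X; u \<in> finsupp_on (A z w \<times> N); b \<in> A w v; b' \<in> A v y\<rbrakk> \<Longrightarrow>
   rmul_fst b' (rmul_fst b u) = rmul_fst (ma b b') u"
  unfolding rmul_fst_def
  by (simp add: tensor_map_tensor_map finsupp_on_finite) (auto intro: tensor_map_cong A.comp_assoc)

lemma rmul_snd_rmul_snd:
  "\<lbrakk>w \<in> X; v \<in> X; y \<in> X; x \<in> X; u \<in> finsupp_on (M \<times> A x w); b \<in> A w v; b' \<in> A v y\<rbrakk> \<Longrightarrow>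
   rmul_snd b' (rmul_snd b u) = rmul_snd (ma b b') u"
  unfolding rmul_snd_def
  by (simp add: tensor_map_tensor_map finsupp_on_finite) (auto intro: tensor_map_cong A.comp_assoc)

lemma rmul_fst_ident:
  "\<lbrakk>w \<in> X; z \<in> X; u \<in> finsupp_on (A z w \<times> N)\<rbrakk> \<Longrightarrow> rmul_fst (ua w) u = u"
  unfolding rmul_fst_def
  by (subst tensor_map_cong[where \<phi>' = "\<lambda>a. a" and \<psi>' = "\<lambda>b. b"]) (auto simp: A.ident_right tensor_map_ident finsupp_on_finite)

lemma rmul_fst_lin_ext:
  "\<lbrakk>finite (fsupp u); \<And>p. p \<in> fsupp u \<Longrightarrow> finite (fsupp (f p))\<rbrakk> \<Longrightarrow>
   rmul_fst b (lin_ext u f) = lin_ext u (\<lambda>p. rmul_fst b (f p))"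
  unfolding rmul_fst_def by (rule tensor_map_lin_ext)

lemma rmul_snd_lin_ext:
  "\<lbrakk>finite (fsupp u); \<And>p. p \<in> fsupp u \<Longrightarrow> finite (fsupp (f p))\<rbrakk> \<Longrightarrow>
   rmul_snd b (lin_ext u f) = lin_ext u (\<lambda>p. rmul_snd b (f p))"
  unfolding rmul_snd_def by (rule tensor_map_lin_ext)

lemma canp_eq: "canp ma rho z x u = lin_ext u (\<lambda>(a, a'). rmul_fst a' (rho z x a))"
  by (simp add: canp_def rmul_fst_def tensor_map_def)

lemma canp_fdelta: "canp ma rho z x (fdelta (a, a')) = rmul_fst a' (rho z x a)"
  by (simp add: canp_eq lin_ext_fdelta)

lemma canp_fadd:
  "finite (fsupp u) \<Longrightarrow> finite (fsupp v) \<Longrightarrow>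
   canp ma rho z x (fadd u v) = fadd (canp ma rho z x u) (canp ma rho z x v)"
  by (simp add: canp_def lin_ext_fadd)

lemma canp_fscale: "finite (fsupp u) \<Longrightarrow> canp ma rho z x (fscale c u) = fscale c (canp ma rho z x u)"
  by (simp add: canp_def lin_ext_fscale)

lemma canp_lin_ext:
  "\<lbrakk>finite (fsupp u); \<And>p. p \<in> fsupp u \<Longrightarrow> finite (fsupp (f p))\<rbrakk> \<Longrightarrow>
   canp ma rho z x (lin_ext u f) = lin_ext u (\<lambda>p. canp ma rho z x (f p))"
  unfolding canp_def by (rule lin_ext_lin_ext)

lemma canp_balanced:
  assumes X: "x \<in> X" "y \<in> X" "z \<in> X" and a: "a \<in> A z x" and \<beta>: "\<beta> \<in> B x" and a': "a' \<in> A x y"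
  shows "(canp ma rho z x (fdelta (ma a \<beta>, a')), canp ma rho z x (fdelta (a, ma \<beta> a')))
         \<in> krel2 sa sh (A z y) (H z x)"
proof -
  txt \<open>(a\<beta>)_[0] a' \<otimes> (a\<beta>)_[1] = a_[0] \<beta>_[0] a' \<otimes> a_[1] \<beta>_[1] = a_[0] \<beta> a' \<otimes> a_[1] 1_x\<close>
  have \<beta>A: "\<beta> \<in> A x x"
    using \<beta> by (rule coinv_in)
  define t :: "'a \<Rightarrow> 'h \<Rightarrow> ('a \<times> 'h \<Rightarrow> 'k) \<Rightarrow> 'a \<times> 'h \<Rightarrow> 'k"
    where "t a0 h = tensor_map (\<lambda>b0. ma (ma a0 b0) a') (mh h)" for a0 h
  let ?rho_a\<beta> = "lin_ext (rho z x a) (\<lambda>(a0, h). tensor_map (ma a0) (mh h) (rho x x \<beta>))"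
  have mult: "(rmul_fst a' (rho z x (ma a \<beta>)), rmul_fst a' ?rho_a\<beta>) \<in> krel2 sa sh (A z y) (H z x)"
    by (rule rmul_fst_krel2[OF X(1,1,2,3) a' rho_mult_tensor_map[OF X(3,1,1) a \<beta>A]])
  have regroup: "rmul_fst a' ?rho_a\<beta> = lin_ext (rho z x a) (\<lambda>(a0, h). t a0 h (rho x x \<beta>))"
    unfolding rmul_fst_def t_def using X a \<beta>A
    by (subst tensor_map_lin_ext) (auto simp: rho_finite finite_fsupp_tensor_map tensor_map_tensor_map intro!: lin_ext_cong_pair)
  have coinvariant: "(lin_ext (rho z x a) (\<lambda>(a0, h). t a0 h (rho x x \<beta>)),
            lin_ext (rho z x a) (\<lambda>(a0, h). t a0 h (fdelta (\<beta>, uh x)))) \<in> krel2 sa sh (A z y) (H z x)"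
    unfolding krel2_eq_trel
  proof (rule trel_lin_ext_cong[OF rho_in[OF X(3,1) a]], unfold prod.case)
    fix a0 h assume "a0 \<in> A z x" "h \<in> H z x"
    then have lin: "klinear_on sa sa (A x x) (A z y) (\<lambda>b0. ma (ma a0 b0) a')"
      "klinear_on sh sh (H x x) (H z x) (mh h)"
      using X a' by (auto intro: klinear_on_comp A.klinear_comp_left A.klinear_comp_right
          H.klinear_comp_left)
    show "(t a0 h (rho x x \<beta>), t a0 h (fdelta (\<beta>, uh x)))
          \<in> trel (finsupp_on (A z y \<times> H z x)) (gens2 sa sh (A z y) (H z x))"
      unfolding t_def krel2_eq_trel[symmetric]
      by (rule tensor_map_krel2[OF coinv_rho[OF \<beta>] lin]) (use X in \<open>simp_all add: A.lin_closed H.lin_closed\<close>)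
  qed
  have unit: "lin_ext (rho z x a) (\<lambda>(a0, h). t a0 h (fdelta (\<beta>, uh x))) = rmul_fst (ma \<beta> a') (rho z x a)"
    unfolding t_def rmul_fst_def tensor_map_fdelta tensor_map_def[of _ "\<lambda>h. h"]
    using X a' \<beta>A finsupp_on_fsupp_pair[OF rho_in[OF X(3,1) a]]
    by (auto intro!: lin_ext_cong_pair simp: A.comp_assoc H.ident_right)
  show ?thesis
    using mult regroup coinvariant unit unfolding canp_fdelta krel2_eq_trel by (metis trel_trans)
qed

lemma canp_brel:
  assumes X: "x \<in> X" "y \<in> X" "z \<in> X" and uv: "(u, v) \<in> brel sa ma (B x) (A z x) (A x y)"
  shows "(canp ma rho z x u, canp ma rho z x v) \<in> krel2 sa sh (A z y) (H z x)"
  unfolding canp_eq krel2_eq_trel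
proof (rule brel_lin_ext[OF uv])
  show "bilinear_mod sa sa (A z x) (A x y) (trel (finsupp_on (A z y \<times> H z x)) (gens2 sa sh (A z y) (H z x)))
          (\<lambda>(a, a'). rmul_fst a' (rho z x a))"
  proof (rule bilinear_modI, unfold krel2_eq_trel[symmetric] prod.case)
    fix a a' b assume "a \<in> A z x" "a' \<in> A z x" "b \<in> A x y"
    then show "(rmul_fst b (rho z x (a + a')), fadd (rmul_fst b (rho z x a)) (rmul_fst b (rho z x a')))
               \<in> krel2 sa sh (A z y) (H z x)"
      using rmul_fst_krel2[OF X(1,1,2,3) _ rho_add] X
      by (simp add: rmul_fst_def tensor_map_fadd rho_finite)
  next
    fix c a b assume "a \<in> A z x" "b \<in> A x y"
    then show "(rmul_fst b (rho z x (sa c a)), fscale c (rmul_fst b (rho z x a))) \<in> krel2 sa sh (A z y) (H z x)"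
      using rmul_fst_krel2[OF X(1,1,2,3) _ rho_scale] X
      by (simp add: rmul_fst_def tensor_map_fscale rho_finite)
  qed (use X in \<open>simp_all add: rmul_fst_add rmul_fst_scale rho_in\<close>)
qed (use X canp_balanced in \<open>simp_all add: rmul_fst_in rho_in canp_fdelta flip: krel2_eq_trel\<close>)

lemma canp_rmul_snd:
  assumes X: "w \<in> X" "x \<in> X" "y \<in> X" "z \<in> X"
    and g: "g \<in> finsupp_on (A z x \<times> A x w)" and a: "a \<in> A w y"
  shows "canp ma rho z x (rmul_snd a g) = rmul_fst a (canp ma rho z x g)"
proof -
  have "canp ma rho z x (rmul_snd a g) = lin_ext g (\<lambda>(l, r). rmul_fst (ma r a) (rho z x l))"
    unfolding rmul_snd_def tensor_map_def
    by (subst canp_lin_ext) (auto simp: finsupp_on_finite[OF g] canp_fdelta intro!: lin_ext_cong_pair)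
  also have "\<dots> = lin_ext g (\<lambda>(l, r). rmul_fst a (rmul_fst r (rho z x l)))"
  proof (rule lin_ext_cong_pair)
    fix l r assume "(l, r) \<in> fsupp g"
    then have "l \<in> A z x" "r \<in> A x w"
      using finsupp_on_fsupp_pair[OF g] by auto
    then show "(\<lambda>(l, r). rmul_fst (ma r a) (rho z x l)) (l, r) =
               (\<lambda>(l, r). rmul_fst a (rmul_fst r (rho z x l))) (l, r)"
      using a by (simp add: rmul_fst_rmul_fst[OF X(2,1,3,4) rho_in[OF X(4,2)]])
  qed
  also have "\<dots> = rmul_fst a (canp ma rho z x g)"
  proof -
    have "finite (fsupp (rmul_fst r (rho z x l)))" if "(l, r) \<in> fsupp g" for l r
      using that finsupp_on_fsupp_pair[OF g] X by (simp add: rmul_fst_def finite_fsupp_tensor_map rho_finite)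
    then show ?thesis
      unfolding canp_eq using finsupp_on_finite[OF g]
      by (subst rmul_fst_lin_ext) (auto intro!: lin_ext_cong_pair)
  qed
  finally show ?thesis .
qed

section \<open>Translation maps\<close>

definition can_inv :: "('h \<Rightarrow> 'a \<times> 'a \<Rightarrow> 'k) \<Rightarrow> ('a \<times> 'h \<Rightarrow> 'k) \<Rightarrow> 'a \<times> 'a \<Rightarrow> 'k" where
  "can_inv \<gamma> v = lin_ext v (\<lambda>(a, h). rmul_snd a (\<gamma> h))"

text \<open>Condition (3) for \<gamma> = \<gamma>'_zx; here can_inv \<gamma> (rho z x a) is \<Sum>_i l'_i(a_[1]) \<otimes> r'_i(a_[1]) a_[0].\<close>

definition translation_map :: "'x \<Rightarrow> 'x \<Rightarrow> ('h \<Rightarrow> 'a \<times> 'a \<Rightarrow> 'k) \<Rightarrow> bool" where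
  "translation_map z x \<gamma> \<longleftrightarrow>
     qlinear_on sh (H z x) (free2 (A z x) (A x z)) (brel sa ma (B x) (A z x) (A x z)) \<gamma> \<and>
     (\<forall>h\<in>H z x. (canp ma rho z x (\<gamma> h), fdelta (ua z, h)) \<in> krel2 sa sh (A z z) (H z x)) \<and>
     (\<forall>a\<in>A z x. (can_inv \<gamma> (rho z x a), fdelta (a, ua x)) \<in> brel sa ma (B x) (A z x) (A x x))"

lemma can_inv_in:
  assumes X: "x \<in> X" "y \<in> X" "z \<in> X"
    and \<gamma>: "\<And>h. h \<in> H z x \<Longrightarrow> \<gamma> h \<in> finsupp_on (A z x \<times> A x z)"
    and v: "v \<in> finsupp_on (A z y \<times> H z x)"
  shows "can_inv \<gamma> v \<in> finsupp_on (A z x \<times> A x y)"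
  unfolding can_inv_def by (rule lin_ext_finsupp_on[OF v]) (simp add: rmul_snd_in[OF X(3,1,2) \<gamma>])

lemma can_inv_lin_ext:
  "\<lbrakk>finite (fsupp u); \<And>p. p \<in> fsupp u \<Longrightarrow> finite (fsupp (f p))\<rbrakk> \<Longrightarrow>
   can_inv \<gamma> (lin_ext u f) = lin_ext u (\<lambda>p. can_inv \<gamma> (f p))"
  unfolding can_inv_def by (rule lin_ext_lin_ext)

lemma can_inv_rmul_fst:
  assumes X: "w \<in> X" "x \<in> X" "y \<in> X" "z \<in> X"
    and \<gamma>: "\<And>h. h \<in> H z x \<Longrightarrow> \<gamma> h \<in> finsupp_on (A z x \<times> A x z)"
    and v: "v \<in> finsupp_on (A z w \<times> H z x)" and b: "b \<in> A w y"
  shows "can_inv \<gamma> (rmul_fst b v) = rmul_snd b (can_inv \<gamma> v)"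
proof -
  have fin: "finite (fsupp (rmul_snd a (\<gamma> h)))" if "(a, h) \<in> fsupp v" for a h
    using that finsupp_on_fsupp_pair[OF v]
    by (simp add: rmul_snd_def finite_fsupp_tensor_map finsupp_on_finite[OF \<gamma>])
  have "can_inv \<gamma> (rmul_fst b v) = lin_ext v (\<lambda>(a, h). rmul_snd (ma a b) (\<gamma> h))"
    unfolding can_inv_def rmul_fst_def using finsupp_on_finite[OF v] by (simp add: lin_ext_tensor_map)
  also have "\<dots> = lin_ext v (\<lambda>(a, h). rmul_snd b (rmul_snd a (\<gamma> h)))"
  proof (rule lin_ext_cong_pair, unfold prod.case)
    fix a h assume "(a, h) \<in> fsupp v"
    then have "a \<in> A z w" "h \<in> H z x"
      using finsupp_on_fsupp_pair[OF v] by auto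
    then show "rmul_snd (ma a b) (\<gamma> h) = rmul_snd b (rmul_snd a (\<gamma> h))"
      using rmul_snd_rmul_snd[OF X(4,1,3,2) \<gamma> _ b] by simp
  qed
  also have "\<dots> = rmul_snd b (can_inv \<gamma> v)"
    unfolding can_inv_def using fin finsupp_on_finite[OF v]
    by (subst rmul_snd_lin_ext) (auto intro!: lin_ext_cong_pair)
  finally show ?thesis .
qed

lemma can_inv_krel2:
  assumes X: "x \<in> X" "y \<in> X" "z \<in> X"
    and \<gamma>: "qlinear_on sh (H z x) (free2 (A z x) (A x z)) (brel sa ma (B x) (A z x) (A x z)) \<gamma>"
    and uv: "(u, v) \<in> krel2 sa sh (A z y) (H z x)"
  shows "(can_inv \<gamma> u, can_inv \<gamma> v) \<in> brel sa ma (B x) (A z x) (A x y)"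
proof -
  have \<gamma>_in: "\<And>h. h \<in> H z x \<Longrightarrow> \<gamma> h \<in> finsupp_on (A z x \<times> A x z)"
    using \<gamma> by (simp add: qlinear_on_def free2_eq_finsupp_on)
  have "bilinear_mod sa sh (A z y) (H z x) (brel sa ma (B x) (A z x) (A x y)) (\<lambda>(a, h). rmul_snd a (\<gamma> h))"
  proof (rule bilinear_modI, unfold prod.case)
    fix a h h' assume a: "a \<in> A z y" and h: "h \<in> H z x" "h' \<in> H z x"
    have "(\<gamma> (h + h'), fadd (\<gamma> h) (\<gamma> h')) \<in> brel sa ma (B x) (A z x) (A x z)"
      using \<gamma> h by (simp add: qlinear_on_def)
    from rmul_snd_brel[OF X(3,1,2,3) a this]
    show "(rmul_snd a (\<gamma> (h + h')), fadd (rmul_snd a (\<gamma> h)) (rmul_snd a (\<gamma> h')))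
          \<in> brel sa ma (B x) (A z x) (A x y)"
      using h by (simp add: rmul_snd_def tensor_map_fadd finsupp_on_finite[OF \<gamma>_in])
  next
    fix c a h assume a: "a \<in> A z y" and h: "h \<in> H z x"
    have "(\<gamma> (sh c h), fscale c (\<gamma> h)) \<in> brel sa ma (B x) (A z x) (A x z)"
      using \<gamma> h by (simp add: qlinear_on_def)
    from rmul_snd_brel[OF X(3,1,2,3) a this]
    show "(rmul_snd a (\<gamma> (sh c h)), fscale c (rmul_snd a (\<gamma> h))) \<in> brel sa ma (B x) (A z x) (A x y)"
      using h by (simp add: rmul_snd_def tensor_map_fscale finsupp_on_finite[OF \<gamma>_in])
  qed (use X \<gamma>_in in \<open>simp_all add: rmul_snd_add rmul_snd_scale\<close>)
  then show ?thesis
    unfolding can_inv_def using uv X \<gamma>_in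
    by (subst (asm) brel_eq_trel, simp add: brel_eq_trel krel2_lin_ext rmul_snd_in)
qed

lemma canp_can_inv:
  assumes X: "x \<in> X" "y \<in> X" "z \<in> X"
    and \<gamma>: "\<And>h. h \<in> H z x \<Longrightarrow> \<gamma> h \<in> finsupp_on (A z x \<times> A x z)"
    and \<gamma>_can: "\<And>h. h \<in> H z x \<Longrightarrow> (canp ma rho z x (\<gamma> h), fdelta (ua z, h)) \<in> krel2 sa sh (A z z) (H z x)"
    and v: "v \<in> finsupp_on (A z y \<times> H z x)"
  shows "(canp ma rho z x (can_inv \<gamma> v), v) \<in> krel2 sa sh (A z y) (H z x)"
proof -
  have fin: "finite (fsupp (rmul_snd a (\<gamma> h)))" if "(a, h) \<in> fsupp v" for a h
    using that finsupp_on_fsupp_pair[OF v]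
    by (simp add: rmul_snd_def finite_fsupp_tensor_map finsupp_on_finite[OF \<gamma>])
  have "canp ma rho z x (can_inv \<gamma> v) = lin_ext v (\<lambda>(a, h). rmul_fst a (canp ma rho z x (\<gamma> h)))"
    unfolding can_inv_def using fin finsupp_on_finite[OF v] finsupp_on_fsupp_pair[OF v]
    by (subst canp_lin_ext) (auto intro!: lin_ext_cong_pair simp: canp_rmul_snd[OF X(3,1,2,3) \<gamma>])
  moreover have "(lin_ext v (\<lambda>(a, h). rmul_fst a (canp ma rho z x (\<gamma> h))),
                  lin_ext v (\<lambda>(a, h). rmul_fst a (fdelta (ua z, h)))) \<in> krel2 sa sh (A z y) (H z x)"
    unfolding krel2_eq_trel
    by (rule trel_lin_ext_cong[OF v]) (simp add: rmul_fst_krel2[OF X(3,1,2,3) _ \<gamma>_can] flip: krel2_eq_trel)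
  moreover have "lin_ext v (\<lambda>(a, h). rmul_fst a (fdelta (ua z, h))) = v"
    using X finsupp_on_fsupp_pair[OF v]
    by (subst lin_ext_cong_pair[where g' = fdelta])
       (auto simp: rmul_fst_fdelta A.ident_left lin_ext_fdelta_right finsupp_on_finite[OF v])
  ultimately show ?thesis
    by simp
qed

lemma can_inv_canp:
  assumes X: "x \<in> X" "y \<in> X" "z \<in> X"
    and \<gamma>: "\<And>h. h \<in> H z x \<Longrightarrow> \<gamma> h \<in> finsupp_on (A z x \<times> A x z)"
    and \<gamma>_rho: "\<And>a. a \<in> A z x \<Longrightarrow> (can_inv \<gamma> (rho z x a), fdelta (a, ua x)) \<in> brel sa ma (B x) (A z x) (A x x)"
    and u: "u \<in> finsupp_on (A z x \<times> A x y)"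
  shows "(can_inv \<gamma> (canp ma rho z x u), u) \<in> brel sa ma (B x) (A z x) (A x y)"
proof -
  have basis: "(can_inv \<gamma> (rmul_fst a' (rho z x a)), fdelta (a, a')) \<in> brel sa ma (B x) (A z x) (A x y)"
    if a: "a \<in> A z x" and a': "a' \<in> A x y" for a a'
  proof -
    have "(rmul_snd a' (can_inv \<gamma> (rho z x a)), rmul_snd a' (fdelta (a, ua x))) \<in> brel sa ma (B x) (A z x) (A x y)"
      by (rule rmul_snd_brel[OF X(1,1,2,3) a' \<gamma>_rho[OF a]])
    moreover have "rmul_snd a' (fdelta (a, ua x)) = fdelta (a, a')"
      using X a' by (simp add: rmul_snd_fdelta A.ident_left)
    ultimately show ?thesis
      by (simp add: can_inv_rmul_fst[OF X(1,1,2,3) \<gamma> rho_in[OF X(3,1) a] a'])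
  qed
  have "can_inv \<gamma> (canp ma rho z x u) = lin_ext u (\<lambda>(a, a'). can_inv \<gamma> (rmul_fst a' (rho z x a)))"
    unfolding canp_eq using finsupp_on_finite[OF u] finsupp_on_fsupp_pair[OF u] X
    by (subst can_inv_lin_ext) (auto intro!: lin_ext_cong_pair simp: rmul_fst_def finite_fsupp_tensor_map rho_finite)
  moreover have "(lin_ext u (\<lambda>(a, a'). can_inv \<gamma> (rmul_fst a' (rho z x a))), lin_ext u fdelta)
                 \<in> brel sa ma (B x) (A z x) (A x y)"
    unfolding brel_eq_trel
    by (rule trel_lin_ext_cong[OF u]) (simp add: basis flip: brel_eq_trel)
  ultimately show ?thesis
    by (simp add: lin_ext_fdelta_right finsupp_on_finite[OF u])
qed

lemma bij_can_of_translation_map: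
  assumes X: "x \<in> X" "y \<in> X" "z \<in> X" and \<gamma>: "translation_map z x \<gamma>"
  shows "bij_betw (qmap (canp ma rho z x) (krel2 sa sh (A z y) (H z x)))
           (tensB sa ma (B x) (A z x) (A x y)) (tensK sa sh (A z y) (H z x))"
  unfolding tensB_eq_quotient tensK_eq_quotient
proof (rule bij_betw_qmap[OF equiv_brel equiv_krel2])
  have ql: "qlinear_on sh (H z x) (free2 (A z x) (A x z)) (brel sa ma (B x) (A z x) (A x z)) \<gamma>"
    using \<gamma> by (simp add: translation_map_def)
  then have \<gamma>_in: "\<And>h. h \<in> H z x \<Longrightarrow> \<gamma> h \<in> finsupp_on (A z x \<times> A x z)"
    by (simp add: qlinear_on_def free2_eq_finsupp_on)
  show "\<And>u v. (u, v) \<in> brel sa ma (B x) (A z x) (A x y) \<Longrightarrow> (canp ma rho z x u, canp ma rho z x v) \<in> krel2 sa sh (A z y) (H z x)"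
    by (rule canp_brel[OF X])
  show "\<And>u v. (u, v) \<in> krel2 sa sh (A z y) (H z x) \<Longrightarrow> (can_inv \<gamma> u, can_inv \<gamma> v) \<in> brel sa ma (B x) (A z x) (A x y)"
    by (rule can_inv_krel2[OF X ql])
  show "\<And>u. u \<in> finsupp_on (A z x \<times> A x y) \<Longrightarrow> (can_inv \<gamma> (canp ma rho z x u), u) \<in> brel sa ma (B x) (A z x) (A x y)"
    using \<gamma> by (intro can_inv_canp[OF X \<gamma>_in]) (simp_all add: translation_map_def)
  show "\<And>v. v \<in> finsupp_on (A z y \<times> H z x) \<Longrightarrow> (canp ma rho z x (can_inv \<gamma> v), v) \<in> krel2 sa sh (A z y) (H z x)"
    using \<gamma> by (intro canp_can_inv[OF X \<gamma>_in]) (simp_all add: translation_map_def)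
qed

lemma translation_candidate_exists:
  assumes X: "x \<in> X" "z \<in> X"
    and surj: "qmap (canp ma rho z x) (krel2 sa sh (A z z) (H z x)) ` tensB sa ma (B x) (A z x) (A x z)
               = tensK sa sh (A z z) (H z x)"
  obtains \<gamma> where "\<And>h. h \<in> H z x \<Longrightarrow> \<gamma> h \<in> finsupp_on (A z x \<times> A x z)"
    and "\<And>h. h \<in> H z x \<Longrightarrow> (canp ma rho z x (\<gamma> h), fdelta (ua z, h)) \<in> krel2 sa sh (A z z) (H z x)"
proof -
  have resp: "\<And>u v. (u, v) \<in> brel sa ma (B x) (A z x) (A x z) \<Longrightarrow>
      (canp ma rho z x u, canp ma rho z x v) \<in> krel2 sa sh (A z z) (H z x)"
    by (rule canp_brel[OF X(1,2,2)])
  have "\<exists>u\<in>finsupp_on (A z x \<times> A x z). (canp ma rho z x u, fdelta (ua z, h)) \<in> krel2 sa sh (A z z) (H z x)"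
    if h: "h \<in> H z x" for h
  proof (rule qmap_surjD[OF equiv_brel equiv_krel2 resp])
    show "qmap (canp ma rho z x) (krel2 sa sh (A z z) (H z x)) `
            (finsupp_on (A z x \<times> A x z) // brel sa ma (B x) (A z x) (A x z))
          = finsupp_on (A z z \<times> H z x) // krel2 sa sh (A z z) (H z x)"
      using surj by (simp add: tensB_eq_quotient tensK_eq_quotient)
    show "fdelta (ua z, h) \<in> finsupp_on (A z z \<times> H z x)"
      using X h by (simp add: finsupp_on_fdelta A.ident_closed)
  qed
  then show thesis
    using that by metis
qed

lemma brel_of_canp_krel2:
  assumes X: "x \<in> X" "y \<in> X" "z \<in> X"
    and inj: "inj_on (qmap (canp ma rho z x) (krel2 sa sh (A z y) (H z x))) (tensB sa ma (B x) (A z x) (A x y))"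
    and u: "u \<in> finsupp_on (A z x \<times> A x y)" and v: "v \<in> finsupp_on (A z x \<times> A x y)"
    and uv: "(canp ma rho z x u, canp ma rho z x v) \<in> krel2 sa sh (A z y) (H z x)"
  shows "(u, v) \<in> brel sa ma (B x) (A z x) (A x y)"
proof (rule inj_on_qmapD[OF equiv_brel equiv_krel2, where f = "canp ma rho z x"])
  show "\<And>u v. (u, v) \<in> brel sa ma (B x) (A z x) (A x y) \<Longrightarrow>
      (canp ma rho z x u, canp ma rho z x v) \<in> krel2 sa sh (A z y) (H z x)"
    by (rule canp_brel[OF X])
  show "inj_on (qmap (canp ma rho z x) (krel2 sa sh (A z y) (H z x)))
          (finsupp_on (A z x \<times> A x y) // brel sa ma (B x) (A z x) (A x y))"
    using inj by (simp add: tensB_eq_quotient)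
qed (fact u v uv)+

lemma qlinear_translation:
  assumes X: "x \<in> X" "z \<in> X"
    and inj: "inj_on (qmap (canp ma rho z x) (krel2 sa sh (A z z) (H z x))) (tensB sa ma (B x) (A z x) (A x z))"
    and \<gamma>: "\<And>h. h \<in> H z x \<Longrightarrow> \<gamma> h \<in> finsupp_on (A z x \<times> A x z)"
    and \<gamma>_can: "\<And>h. h \<in> H z x \<Longrightarrow> (canp ma rho z x (\<gamma> h), fdelta (ua z, h)) \<in> krel2 sa sh (A z z) (H z x)"
  shows "qlinear_on sh (H z x) (free2 (A z x) (A x z)) (brel sa ma (B x) (A z x) (A x z)) \<gamma>"
proof -
  let ?can = "canp ma rho z x" and ?r = "krel2 sa sh (A z z) (H z x)"
  have reflect: "(u, v) \<in> brel sa ma (B x) (A z x) (A x z)"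
    if "u \<in> finsupp_on (A z x \<times> A x z)" "v \<in> finsupp_on (A z x \<times> A x z)"
      and "(?can u, fdelta (ua z, h)) \<in> ?r" "(?can v, fdelta (ua z, h)) \<in> ?r" for u v h
  proof (rule brel_of_canp_krel2[OF X(1,2,2) inj that(1,2)])
    show "(?can u, ?can v) \<in> ?r"
      using that(3,4) unfolding krel2_eq_trel by (rule trel_trans[OF _ trel_sym])
  qed
  have "(\<gamma> (h + h'), fadd (\<gamma> h) (\<gamma> h')) \<in> brel sa ma (B x) (A z x) (A x z)"
    if h: "h \<in> H z x" "h' \<in> H z x" for h h'
  proof (rule reflect)
    have "(?can (fadd (\<gamma> h) (\<gamma> h')), fadd (fdelta (ua z, h)) (fdelta (ua z, h'))) \<in> ?r"
      using \<gamma>_can[OF h(1)] \<gamma>_can[OF h(2)] unfolding krel2_eq_trel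
      by (simp add: canp_fadd finsupp_on_finite[OF \<gamma>] h trel_fadd)
    moreover have "(fdelta (ua z, h + h'), fadd (fdelta (ua z, h)) (fdelta (ua z, h'))) \<in> ?r"
      using X h by (simp add: krel2_add_snd A.ident_closed H.add_closed)
    ultimately show "(?can (fadd (\<gamma> h) (\<gamma> h')), fdelta (ua z, h + h')) \<in> ?r"
      unfolding krel2_eq_trel by (rule trel_trans[OF _ trel_sym])
  qed (use X h \<gamma> \<gamma>_can in \<open>simp_all add: H.add_closed finsupp_on_fadd\<close>)
  moreover have "(\<gamma> (sh c h), fscale c (\<gamma> h)) \<in> brel sa ma (B x) (A z x) (A x z)"
    if h: "h \<in> H z x" for c h
  proof (rule reflect)
    have "(?can (fscale c (\<gamma> h)), fscale c (fdelta (ua z, h))) \<in> ?r"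
      using \<gamma>_can[OF h] unfolding krel2_eq_trel
      by (simp add: canp_fscale finsupp_on_finite[OF \<gamma>] h trel_fscale)
    moreover have "(fdelta (ua z, sh c h), fscale c (fdelta (ua z, h))) \<in> ?r"
      using X h by (simp add: krel2_scale_snd A.ident_closed H.scale_closed)
    ultimately show "(?can (fscale c (\<gamma> h)), fdelta (ua z, sh c h)) \<in> ?r"
      unfolding krel2_eq_trel by (rule trel_trans[OF _ trel_sym])
  qed (use X h \<gamma> \<gamma>_can in \<open>simp_all add: H.scale_closed finsupp_on_fscale\<close>)
  ultimately show ?thesis
    using \<gamma> by (simp add: qlinear_on_def free2_eq_finsupp_on)
qed

lemma translation_rho:
  assumes X: "x \<in> X" "z \<in> X"
    and inj: "inj_on (qmap (canp ma rho z x) (krel2 sa sh (A z x) (H z x))) (tensB sa ma (B x) (A z x) (A x x))"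
    and \<gamma>: "\<And>h. h \<in> H z x \<Longrightarrow> \<gamma> h \<in> finsupp_on (A z x \<times> A x z)"
    and \<gamma>_can: "\<And>h. h \<in> H z x \<Longrightarrow> (canp ma rho z x (\<gamma> h), fdelta (ua z, h)) \<in> krel2 sa sh (A z z) (H z x)"
    and a: "a \<in> A z x"
  shows "(can_inv \<gamma> (rho z x a), fdelta (a, ua x)) \<in> brel sa ma (B x) (A z x) (A x x)"
proof (rule brel_of_canp_krel2[OF X(1,1,2) inj])
  show "can_inv \<gamma> (rho z x a) \<in> finsupp_on (A z x \<times> A x x)"
    by (rule can_inv_in[OF X(1,1,2) \<gamma> rho_in[OF X(2,1) a]])
  show "fdelta (a, ua x) \<in> finsupp_on (A z x \<times> A x x)"
    using X a by (simp add: finsupp_on_fdelta A.ident_closed)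
  have "canp ma rho z x (fdelta (a, ua x)) = rho z x a"
    by (simp add: canp_fdelta rmul_fst_ident[OF X(1,2) rho_in[OF X(2,1) a]])
  then show "(canp ma rho z x (can_inv \<gamma> (rho z x a)), canp ma rho z x (fdelta (a, ua x)))
             \<in> krel2 sa sh (A z x) (H z x)"
    using canp_can_inv[OF X(1,1,2) \<gamma> \<gamma>_can rho_in[OF X(2,1) a]] by simp
qed

lemma translation_map_exists:
  assumes X: "x \<in> X" "z \<in> X"
    and bij: "bij_betw (qmap (canp ma rho z x) (krel2 sa sh (A z z) (H z x)))
                (tensB sa ma (B x) (A z x) (A x z)) (tensK sa sh (A z z) (H z x))"
    and inj: "inj_on (qmap (canp ma rho z x) (krel2 sa sh (A z x) (H z x))) (tensB sa ma (B x) (A z x) (A x x))"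
  shows "\<exists>\<gamma>. translation_map z x \<gamma>"
proof -
  obtain \<gamma> where \<gamma>: "\<And>h. h \<in> H z x \<Longrightarrow> \<gamma> h \<in> finsupp_on (A z x \<times> A x z)"
    and \<gamma>_can: "\<And>h. h \<in> H z x \<Longrightarrow> (canp ma rho z x (\<gamma> h), fdelta (ua z, h)) \<in> krel2 sa sh (A z z) (H z x)"
    using translation_candidate_exists[OF X] bij by (auto simp: bij_betw_def)
  have "translation_map z x \<gamma>"
    unfolding translation_map_def
    using qlinear_translation[OF X _ \<gamma> \<gamma>_can] translation_rho[OF X inj \<gamma> \<gamma>_can] \<gamma>_can bij
    by (simp add: bij_betw_def)
  then show ?thesis by blast
qed

end

lemma linear_coaction_of_comodule_cat:
  assumes "semi_hopf_cat sh X H mh uh dl ep" and "comodule_cat sh H mh uh dl ep sa X A ma ua rho"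
  shows "linear_coaction sa X A ma ua sh H mh uh rho"
  using assms
  unfolding linear_coaction_def linear_coaction_axioms_def klinear_cat_def semi_hopf_cat_def comodule_cat_def
  by blast

theorem theorem3p12:
  fixes X :: "'x set"
    and sh :: "'k::comm_ring_1 \<Rightarrow> 'h::ab_group_add \<Rightarrow> 'h"
    and H :: "'x \<Rightarrow> 'x \<Rightarrow> 'h set" and mh :: "'h \<Rightarrow> 'h \<Rightarrow> 'h" and uh :: "'x \<Rightarrow> 'h"
    and dl :: "'x \<Rightarrow> 'x \<Rightarrow> 'h \<Rightarrow> ('h \<times> 'h \<Rightarrow> 'k)" and ep :: "'x \<Rightarrow> 'x \<Rightarrow> 'h \<Rightarrow> 'k"
    and sa :: "'k \<Rightarrow> 'a::ab_group_add \<Rightarrow> 'a"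
    and A :: "'x \<Rightarrow> 'x \<Rightarrow> 'a set" and ma :: "'a \<Rightarrow> 'a \<Rightarrow> 'a" and ua :: "'x \<Rightarrow> 'a"
    and rho :: "'x \<Rightarrow> 'x \<Rightarrow> 'a \<Rightarrow> ('a \<times> 'h \<Rightarrow> 'k)"
  assumes hopf: "semi_hopf_cat sh X H mh uh dl ep"
    and comod: "comodule_cat sh H mh uh dl ep sa X A ma ua rho"
  defines "B \<equiv> coinv sh H uh sa A rho"
  shows
    "((\<forall>x\<in>X. \<forall>y\<in>X. \<forall>z\<in>X.
         bij_betw (qmap (canp ma rho z x) (krel2 sa sh (A z y) (H z x)))
                  (tensB sa ma (B x) (A z x) (A x y)) (tensK sa sh (A z y) (H z x)))
      \<longleftrightarrow>
      (\<forall>x\<in>X. \<forall>z\<in>X.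
         bij_betw (qmap (canp ma rho z x) (krel2 sa sh (A z z) (H z x)))
                  (tensB sa ma (B x) (A z x) (A x z)) (tensK sa sh (A z z) (H z x)) \<and>
         (\<exists>g. \<forall>C\<in>tensB sa ma (B x) (A z x) (A x x).
                 g (qmap (canp ma rho z x) (krel2 sa sh (A z x) (H z x)) C) = C)))
   \<and>
     ((\<forall>x\<in>X. \<forall>y\<in>X. \<forall>z\<in>X.
         bij_betw (qmap (canp ma rho z x) (krel2 sa sh (A z y) (H z x)))
                  (tensB sa ma (B x) (A z x) (A x y)) (tensK sa sh (A z y) (H z x)))
      \<longleftrightarrow>
      (\<forall>x\<in>X. \<forall>z\<in>X. \<exists>\<gamma> :: 'h \<Rightarrow> ('a \<times> 'a \<Rightarrow> 'k).
         qlinear_on sh (H z x) (free2 (A z x) (A x z)) (brel sa ma (B x) (A z x) (A x z)) \<gamma> \<and>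
         (\<forall>h\<in>H z x. (canp ma rho z x (\<gamma> h), fdelta (ua z, h)) \<in> krel2 sa sh (A z z) (H z x)) \<and>
         (\<forall>a\<in>A z x.
            (lin_ext (rho z x a) (\<lambda>(a0, h). lin_ext (\<gamma> h) (\<lambda>(l, r). fdelta (l, ma r a0))),
             fdelta (a, ua x)) \<in> brel sa ma (B x) (A z x) (A x x))))"
proof -
  interpret linear_coaction sa X A ma ua sh H mh uh rho
    using hopf comod by (rule linear_coaction_of_comodule_cat)
  have can_inv_rho: "lin_ext (rho z x a) (\<lambda>(a0, h). lin_ext (\<gamma> h) (\<lambda>(l, r). fdelta (l, ma r a0)))
                     = can_inv \<gamma> (rho z x a)" for \<gamma> z x a
    by (simp add: can_inv_def rmul_snd_def tensor_map_def)
  show ?thesis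
    unfolding B_def can_inv_rho translation_map_def[symmetric] ex_left_inverse_iff_inj_on
    by (intro conjI iffI; meson bij_can_of_translation_map translation_map_exists bij_betw_imp_inj_on)
qed

end
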